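(* Let $\mathcal{A}=\{1,\dots,L\}$ and let $Q_T$ be a pmf on $\mathcal{A}$ with $Q_T(a)>0$ for all $a$ and $Q_T\ne U_L$. For each $n\ge1$ let \[ D_n^*=\min_{\emptyset\ne\mathcal{S}\subseteq\mathcal{A}^n}D(U_{\mathcal{S}}\|Q_T^n), \] where $U_{\mathcal{S}}$ is the uniform pmf on $\mathcal{S}$ (viewed as a pmf on $\mathcal{A}^n$). Then $D_n^*$ grows as $\frac12\log_2n$, i.e. $\lim_{n\to\infty}D_n^*/(\tfrac12\log_2 n)=1$, and if for each $n$ the set $\mathcal{S}_n$ attains the minimum $D_n^*$, then the rate $R_{\mathrm{info}}=\frac1n\log_2|\mathcal{S}_n|$ satisfies $R_{\mathrm{info}}\to H(Q_T)$ as $n\to\infty$.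
   Context: $U_L$ is the uniform pmf on $\mathcal{A}$. $D(P\|Q)=\sum_{x:P(x)>0}P(x)\log_2\frac{P(x)}{Q(x)}$ is informational divergence, $Q_T^n(a^n)=\prod_iQ_T(a_i)$ is the iid pmf, and $H(Q_T)=-\sum_aQ_T(a)\log_2Q_T(a)$ is entropy. A block distribution matcher of length $n$ is identified with its codebook $\mathcal{S}\subseteq\mathcal{A}^n$, whose output pmf is $U_{\mathcal{S}}$. *)

theory Defs
  imports "HOL-Analysis.Analysis"
begin

definition words :: "nat \<Rightarrow> nat \<Rightarrow> nat list set" where
  "words L n = {xs. length xs = n \<and> set xs \<subseteq> {1..L}}"

definition unif_L :: "nat \<Rightarrow> nat \<Rightarrow> real" where
  "unif_L L a = (if a \<in> {1..L} then 1 / real L else 0)"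

definition unif_set :: "'a set \<Rightarrow> 'a \<Rightarrow> real" where
  "unif_set S x = (if x \<in> S then 1 / real (card S) else 0)"

definition iid :: "(nat \<Rightarrow> real) \<Rightarrow> nat list \<Rightarrow> real" where
  "iid Q xs = prod_list (map Q xs)"

definition divergence :: "'a set \<Rightarrow> ('a \<Rightarrow> real) \<Rightarrow> ('a \<Rightarrow> real) \<Rightarrow> real" where
  "divergence X P Q = (\<Sum>x\<in>{x\<in>X. P x > 0}. P x * log 2 (P x / Q x))"

definition entropy_L :: "nat \<Rightarrow> (nat \<Rightarrow> real) \<Rightarrow> real" where
  "entropy_L L Q = - (\<Sum>a\<in>{1..L}. Q a * log 2 (Q a))"

definition Dcode :: "nat \<Rightarrow> (nat \<Rightarrow> real) \<Rightarrow> nat \<Rightarrow> nat list set \<Rightarrow> real" where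
  "Dcode L Q n S = divergence (words L n) (unif_set S) (iid Q)"

definition Dstar :: "nat \<Rightarrow> (nat \<Rightarrow> real) \<Rightarrow> nat \<Rightarrow> real" where
  "Dstar L Q n = Min {Dcode L Q n S | S. S \<noteq> {} \<and> S \<subseteq> words L n}"

end

theory Submission
  imports Defs "HOL-Real_Asymp.Real_Asymp"
begin

(* Write s(x) = -log2 Q_T^n(x) for the self-information of a word x.  For a codebook S,
  D(U_S || Q_T^n) is the average of s over S minus log2 |S|, so a good codebook is a large set
  of words of small self-information.

  Upper bound: by Chebyshev, half of the Q_T^n-mass has s within O(sqrt n) of n H(Q_T), so one
  of these O(sqrt n) unit windows of s carries mass c / sqrt n; taking S to be that window gives
  D <= 1 - log2 (mass of S) <= (1/2) log2 n + O(1).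

  Lower bound: as Q_T is not uniform, two letters a, b have Q_T(a) ~= Q_T(b).  Conditionally on
  the positions of the letters a and b, the number of a's is binomial and s is an affine function
  of it with nonzero slope; binomial probabilities are O(1 / sqrt m), hence every unit window of s
  has mass O(1 / sqrt n).  So at most 2^k c / sqrt n words have s < k, and summing over the layers
  s >= k gives D >= (1/2) log2 n - O(1).

  Rate: the same layer-cake estimate, fed with Chebyshev tail bounds, shows that a codebook with
  log2 |S| outside n (H(Q_T) +- delta) + O(log n) has divergence log2 n - O(1), which eventually
  exceeds D_n^*. *)

lemma words_0: "words L 0 = {[]}"
  by (auto simp: words_def)

lemma words_Suc: "words L (Suc n) = (\<lambda>(a, x). a # x) ` ({1..L} \<times> words L n)"
proof
  show "words L (Suc n) \<subseteq> (\<lambda>(a, x). a # x) ` ({1..L} \<times> words L n)"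
  proof
    fix xs assume "xs \<in> words L (Suc n)"
    then obtain a x where "xs = a # x" "length x = n" "a \<in> {1..L}" "set x \<subseteq> {1..L}"
      unfolding words_def by (cases xs) auto
    then show "xs \<in> (\<lambda>(a, x). a # x) ` ({1..L} \<times> words L n)"
      unfolding words_def by force
  qed
qed (auto simp: words_def)

lemma finite_words: "finite (words L n)"
  by (induction n) (auto simp: words_0 words_Suc)

lemma card_words: "card (words L n) = L ^ n"
proof (induction n)
  case 0
  then show ?case by (simp add: words_0)
next
  case (Suc n)
  have "inj_on (\<lambda>(a, x). a # x) ({1..L} \<times> words L n)"
    by (auto simp: inj_on_def)
  then show ?case
    using Suc by (simp add: words_Suc card_image card_cartesian_product)
qed

lemma sum_words_Suc:
  "(\<Sum>x\<in>words L (Suc n). f x) = (\<Sum>a\<in>{1..L}. \<Sum>x\<in>words L n. f (a # x))"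
proof -
  have inj: "inj_on (\<lambda>(a, x). a # x) ({1..L} \<times> words L n)"
    by (auto simp: inj_on_def)
  have "(\<Sum>x\<in>words L (Suc n). f x) = (\<Sum>(a, x)\<in>{1..L} \<times> words L n. f (a # x))"
    unfolding words_Suc by (subst sum.reindex[OF inj]) (simp add: case_prod_beta')
  also have "\<dots> = (\<Sum>a\<in>{1..L}. \<Sum>x\<in>words L n. f (a # x))"
    by (rule sum.cartesian_product[symmetric])
  finally show ?thesis .
qed

lemma iid_Nil [simp]: "iid Q [] = 1"
  by (simp add: iid_def)

lemma iid_Cons [simp]: "iid Q (a # x) = Q a * iid Q x"
  by (simp add: iid_def)

section \<open>Binomial probabilities\<close>

definition binom_prob :: "nat \<Rightarrow> real \<Rightarrow> nat \<Rightarrow> real" where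
  "binom_prob m r k = real (m choose k) * r ^ k * (1 - r) ^ (m - k)"

lemma binom_prob_nonneg: "0 \<le> r \<Longrightarrow> r \<le> 1 \<Longrightarrow> 0 \<le> binom_prob m r k"
  by (simp add: binom_prob_def)

lemma sum_binom_prob: "(\<Sum>k\<le>m. binom_prob m r k) = 1"
  using binomial_ring[of r "1 - r" m] by (simp add: binom_prob_def)

lemma binom_prob_le_1:
  assumes "0 \<le> r" "r \<le> 1" "k \<le> m"
  shows "binom_prob m r k \<le> 1"
proof -
  have "binom_prob m r k \<le> (\<Sum>k\<le>m. binom_prob m r k)"
    by (rule member_le_sum) (use assms binom_prob_nonneg in auto)
  then show ?thesis
    by (simp add: sum_binom_prob)
qed

lemma binom_prob_eq_0: "m < k \<Longrightarrow> binom_prob m r k = 0"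
  by (simp add: binom_prob_def)

lemma binom_prob_symmetric: "k \<le> m \<Longrightarrow> binom_prob m r k = binom_prob m (1 - r) (m - k)"
  unfolding binom_prob_def by (simp add: binomial_symmetric[symmetric] mult_ac)

lemma binom_prob_ratio:
  fixes r :: real
  assumes "j < m"
  shows "binom_prob m r j * (real (m - j) * r) = binom_prob m r (Suc j) * (real (Suc j) * (1 - r))"
proof -
  have c: "real (m - j) * real (m choose j) = real (Suc j) * real (m choose Suc j)"
    using binomial_absorb_comp[of m j] binomial_absorption[of j m] by (metis of_nat_mult)
  have e: "m - j = Suc (m - Suc j)"
    using assms by simp
  have "binom_prob m r j * (real (m - j) * r)
      = (real (m - j) * real (m choose j)) * r ^ Suc j * (1 - r) ^ (m - Suc j) * (1 - r)"
    unfolding binom_prob_def e by (simp add: algebra_simps)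
  also have "\<dots> = binom_prob m r (Suc j) * (real (Suc j) * (1 - r))"
    unfolding c binom_prob_def by (simp add: algebra_simps)
  finally show ?thesis .
qed

lemma binom_prob_Suc_0: "binom_prob (Suc m) r 0 = (1 - r) * binom_prob m r 0"
  by (simp add: binom_prob_def)

lemma binom_prob_Suc_Suc:
  "binom_prob (Suc m) r (Suc k) = r * binom_prob m r k + (1 - r) * binom_prob m r (Suc k)"
proof (cases "k < m")
  case True
  then have "m - k = Suc (m - Suc k)"
    by simp
  then have "(1 - r) ^ (m - k) = (1 - r) * (1 - r) ^ (m - Suc k)"
    by simp
  show ?thesis
    by (simp add: binom_prob_def \<open>(1 - r) ^ (m - k) = _\<close> algebra_simps)
qed (simp add: binom_prob_def algebra_simps)

lemma sum_binom_prob_Suc: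
  "(\<Sum>k\<le>Suc m. binom_prob (Suc m) r k * G k)
     = (\<Sum>k\<le>m. binom_prob m r k * (r * G (Suc k) + (1 - r) * G k))"
proof -
  have shift: "binom_prob m r 0 * G 0 + (\<Sum>k\<le>m. binom_prob m r (Suc k) * G (Suc k))
      = (\<Sum>k\<le>m. binom_prob m r k * G k)"
    by (subst sum.atMost_Suc_shift[symmetric]) (simp add: binom_prob_eq_0)
  have "(\<Sum>k\<le>Suc m. binom_prob (Suc m) r k * G k)
      = (1 - r) * (binom_prob m r 0 * G 0)
        + (\<Sum>k\<le>m. r * (binom_prob m r k * G (Suc k)) + (1 - r) * (binom_prob m r (Suc k) * G (Suc k)))"
    by (simp add: sum.atMost_Suc_shift binom_prob_Suc_0 binom_prob_Suc_Suc algebra_simps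
        del: sum.atMost_Suc)
  also have "\<dots> = r * (\<Sum>k\<le>m. binom_prob m r k * G (Suc k))
      + (1 - r) * (binom_prob m r 0 * G 0 + (\<Sum>k\<le>m. binom_prob m r (Suc k) * G (Suc k)))"
    by (simp add: sum.distrib sum_distrib_left distrib_left)
  also have "\<dots> = (\<Sum>k\<le>m. binom_prob m r k * (r * G (Suc k) + (1 - r) * G k))"
    unfolding shift by (simp add: distrib_left sum.distrib sum_distrib_left mult.left_commute)
  finally show ?thesis .
qed

lemma binom_ratio_ineq:
  fixes m r T i :: real
  assumes r: "0 < r" "r < 1" and T: "0 \<le> T" "T + 1 \<le> m * r * (1 - r)" and i: "m * r - T \<le> i"
  shows "(1 - (T + 1) / (m * r * (1 - r))) * ((m - i + 1) * r) \<le> i * (1 - r)"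
proof -
  define s2 where "s2 = m * r * (1 - r)"
  define x where "x = (T + 1) / s2"
  define t where "t = m * r - i"
  have s2_pos: "s2 > 0"
    using T by (simp add: s2_def)
  have x0: "0 \<le> x" and x1: "x \<le> 1" and xs: "x * s2 = T + 1"
    using T s2_pos by (auto simp: x_def s2_def)
  have ti: "i = m * r - t" and tT: "t \<le> T"
    using i by (auto simp: t_def)
  have e1: "i * (1 - r) = s2 - t * (1 - r)" and e2: "(m - i + 1) * r = s2 + (t + 1) * r"
    unfolding ti s2_def by (simp_all add: algebra_simps)
  have key: "0 \<le> (T + 1 - t - r) + x * ((t + 1) * r)"
  proof (cases "t + 1 \<ge> 0")
    case True
    then have "x * ((t + 1) * r) \<ge> 0"
      using x0 r by simp
    then show ?thesis
      using tT r by linarith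
  next
    case False
    have "x * ((t + 1) * r) \<ge> 1 * ((t + 1) * r)"
      using False x1 r by (intro mult_right_mono_neg) (auto intro: mult_nonpos_nonneg)
    moreover have "T + 1 - t - r + (t + 1) * r = T + 1 - t * (1 - r)"
      by (simp add: algebra_simps)
    moreover have "t * (1 - r) \<le> 0"
      using False r by (simp add: mult_nonpos_nonneg)
    ultimately show ?thesis
      using T by linarith
  qed
  have "(1 - x) * ((m - i + 1) * r) = s2 + (t + 1) * r - x * s2 - x * ((t + 1) * r)"
    unfolding e2 by (simp add: algebra_simps)
  also have "\<dots> = s2 + (t + 1) * r - (T + 1) - x * ((t + 1) * r)"
    using xs by simp
  also have "\<dots> \<le> i * (1 - r)"
    unfolding e1 using key by (simp add: algebra_simps)
  finally show ?thesis
    unfolding x_def s2_def .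
qed

lemma binom_prob_step_down:
  fixes r :: real
  assumes r: "0 < r" "r < 1" and T: "real T + 1 \<le> m * r * (1 - r)"
    and j: "Suc j \<le> m" "m * r - T \<le> Suc j"
  shows "binom_prob m r (Suc j) * (1 - (real T + 1) / (m * r * (1 - r))) \<le> binom_prob m r j"
proof -
  have jm: "j < m"
    using j by simp
  have mj: "real (m - j) = real m - real (Suc j) + 1"
    using jm by simp
  define x where "x = (real T + 1) / (m * r * (1 - r))"
  have "(1 - x) * (real (m - j) * r) \<le> real (Suc j) * (1 - r)"
    unfolding mj x_def by (rule binom_ratio_ineq) (use r T j in auto)
  then have "binom_prob m r (Suc j) * (1 - x) * (real (m - j) * r)
      \<le> binom_prob m r (Suc j) * (real (Suc j) * (1 - r))"
    using binom_prob_nonneg[of r m "Suc j"] r by (simp add: mult_left_mono mult.assoc)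
  also have "\<dots> = binom_prob m r j * (real (m - j) * r)"
    using binom_prob_ratio[OF jm] by simp
  finally have "binom_prob m r (Suc j) * (1 - x) * (real (m - j) * r)
      \<le> binom_prob m r j * (real (m - j) * r)" .
  moreover have "0 < real (m - j) * r"
    using jm r by simp
  ultimately show ?thesis
    unfolding x_def by (rule mult_right_le_imp_le)
qed

lemma binom_prob_linear_decay:
  fixes r :: real
  assumes r: "0 < r" "r < 1" and T: "real T + 1 \<le> m * r * (1 - r)"
    and k: "m * r \<le> k" "k \<le> m" and j: "j \<le> T"
  shows "binom_prob m r k * (1 - j * ((real T + 1) / (m * r * (1 - r)))) \<le> binom_prob m r (k - j)"
  using j
proof (induction j)
  case 0
  then show ?case by simp
next
  case (Suc j)
  define x where "x = (real T + 1) / (m * r * (1 - r))"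
  have x0: "0 \<le> x" and x1: "x \<le> 1"
    using T by (auto simp: x_def)
  have "m * r * (1 - r) \<le> m * r"
    using r by (simp add: mult_left_le)
  then have "real T \<le> real k"
    using T k by linarith
  then have kj: "Suc (k - Suc j) = k - j"
    using Suc.prems by linarith
  have "Suc (k - Suc j) \<le> m"
    using kj k by simp
  moreover have "m * r - T \<le> Suc (k - Suc j)"
    using kj k Suc.prems \<open>real T \<le> real k\<close> by simp
  ultimately have "binom_prob m r (Suc (k - Suc j)) * (1 - x) \<le> binom_prob m r (k - Suc j)"
    unfolding x_def by (rule binom_prob_step_down[OF r T])
  then have step: "binom_prob m r (k - j) * (1 - x) \<le> binom_prob m r (k - Suc j)"
    by (simp only: kj)
  have ih: "binom_prob m r k * (1 - j * x) \<le> binom_prob m r (k - j)"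
    using Suc.IH[folded x_def] Suc.prems by simp
  have "1 - Suc j * x \<le> (1 - j * x) * (1 - x)"
    using x0 by (simp add: algebra_simps)
  then have "binom_prob m r k * (1 - Suc j * x) \<le> binom_prob m r k * (1 - j * x) * (1 - x)"
    using binom_prob_nonneg[of r m k] r by (simp add: mult_left_mono mult.assoc)
  also have "\<dots> \<le> binom_prob m r (k - j) * (1 - x)"
    using ih x1 by (intro mult_right_mono) auto
  also have "\<dots> \<le> binom_prob m r (k - Suc j)"
    by (rule step)
  finally show ?case
    unfolding x_def .
qed

lemma binom_prob_le_of_plateau:
  fixes r :: real
  assumes r: "0 < r" "r < 1" and k: "m * r \<le> k" "k \<le> m"
    and T: "real T + 1 \<le> m * r * (1 - r)"
    and Tx: "real T * ((real T + 1) / (m * r * (1 - r))) \<le> 1 / 2"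
  shows "binom_prob m r k * (real T + 1) \<le> 2"
proof -
  define s2 where "s2 = m * r * (1 - r)"
  have s2_pos: "0 < s2"
    using T by (simp add: s2_def)
  have half: "binom_prob m r k / 2 \<le> binom_prob m r (k - j)" if "j \<le> T" for j
  proof -
    have "real j * ((real T + 1) / s2) \<le> real T * ((real T + 1) / s2)"
      using that s2_pos by (intro mult_right_mono) auto
    then have "1 / 2 \<le> 1 - j * ((real T + 1) / s2)"
      using Tx unfolding s2_def by linarith
    then have "binom_prob m r k * (1 / 2) \<le> binom_prob m r k * (1 - j * ((real T + 1) / s2))"
      using binom_prob_nonneg[of r m k] r by (intro mult_left_mono) auto
    also have "\<dots> \<le> binom_prob m r (k - j)"
      using binom_prob_linear_decay[OF r T k that] unfolding s2_def .
    finally show ?thesis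
      by simp
  qed
  have "s2 \<le> m * r"
    using r by (simp add: s2_def mult_left_le)
  then have "real T \<le> real k"
    using T k by (simp add: s2_def)
  then have kT: "T \<le> k"
    by simp
  have "(real T + 1) * (binom_prob m r k / 2) = (\<Sum>j\<le>T. binom_prob m r k / 2)"
    by simp
  also have "\<dots> \<le> (\<Sum>j\<le>T. binom_prob m r (k - j))"
    by (intro sum_mono half) auto
  also have "\<dots> = (\<Sum>i\<in>(\<lambda>j. k - j) ` {..T}. binom_prob m r i)"
    using kT by (subst sum.reindex) (auto simp: inj_on_def)
  also have "\<dots> \<le> (\<Sum>i\<le>m. binom_prob m r i)"
    by (intro sum_mono2) (use k r binom_prob_nonneg in auto)
  also have "\<dots> = 1"
    by (rule sum_binom_prob)
  finally show ?thesis
    by (simp add: algebra_simps)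
qed

lemma binom_prob_le_upper_half:
  fixes r :: real
  assumes r: "0 < r" "r < 1" and m: "m \<ge> 1" and k: "m * r \<le> k" "k \<le> m"
  shows "binom_prob m r k \<le> 4 / sqrt (m * r * (1 - r))"
proof -
  define s2 where "s2 = m * r * (1 - r)"
  define s where "s = sqrt s2"
  have s_pos: "s > 0"
    using r m by (simp add: s_def s2_def)
  have ss: "s * s = s2"
    using s_pos by (simp add: s_def)
  show ?thesis
  proof (cases "s < 2")
    case True
    then have "1 \<le> 4 / s"
      using s_pos by (simp add: field_simps)
    then show ?thesis
      using binom_prob_le_1[of r k m] r k by (simp add: s_def s2_def)
  next
    case False
    define T where "T = nat \<lfloor>s / 2\<rfloor>"
    have T1: "real T \<le> s / 2" and T2: "s / 2 < real T + 1"
      using s_pos by (auto simp: T_def) linarith+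
    have "s * 1 \<le> s * s"
      using False s_pos by (intro mult_left_mono) auto
    then have "s \<le> s2"
      using ss by simp
    then have Ts2: "real T + 1 \<le> s2"
      using T1 False by linarith
    have "real T * (real T + 1) \<le> (s / 2) * s"
      using T1 Ts2 False by (intro mult_mono) auto
    then have "real T * (real T + 1) \<le> s2 / 2"
      using ss by simp
    then have "real T * ((real T + 1) / s2) \<le> 1 / 2"
      using Ts2 by (simp add: pos_divide_le_eq)
    then have "binom_prob m r k * (real T + 1) \<le> 2"
      using binom_prob_le_of_plateau[OF r k] Ts2 unfolding s2_def by blast
    then have "binom_prob m r k \<le> 2 / (real T + 1)"
      by (simp add: pos_le_divide_eq)
    also have "\<dots> \<le> 2 / (s / 2)"
      using T2 s_pos by (intro divide_left_mono) auto
    finally show ?thesis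
      by (simp add: s_def s2_def)
  qed
qed

lemma binom_prob_le_sqrt:
  fixes r :: real
  assumes r: "0 < r" "r < 1" and m: "m \<ge> 1" and k: "k \<le> m"
  shows "binom_prob m r k \<le> 4 / sqrt (m * r * (1 - r))"
proof (cases "m * r \<le> real k")
  case True
  then show ?thesis
    using binom_prob_le_upper_half[OF r m True k] by simp
next
  case False
  then have "m * (1 - r) \<le> real (m - k)"
    using k by (simp add: algebra_simps)
  then have "binom_prob m (1 - r) (m - k) \<le> 4 / sqrt (m * (1 - r) * (1 - (1 - r)))"
    using r m by (intro binom_prob_le_upper_half) auto
  then show ?thesis
    using binom_prob_symmetric[OF k, of r] by (simp add: mult_ac)
qed

lemma card_unit_window_le:
  fixes K :: "nat set" and \<delta> \<alpha> t :: real
  assumes "\<delta> \<noteq> 0" and "finite K"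
    and window: "\<And>k. k \<in> K \<Longrightarrow> t \<le> \<alpha> - k * \<delta> \<and> \<alpha> - k * \<delta> < t + 1"
  shows "card K \<le> 1 / \<bar>\<delta>\<bar> + 1"
proof (cases "K = {}")
  case False
  define k0 where "k0 = Min K"
  define k1 where "k1 = Max K"
  have k0: "k0 \<in> K" and k1: "k1 \<in> K" and sub: "K \<subseteq> {k0..k1}"
    using assms False by (auto simp: k0_def k1_def)
  then have le: "k0 \<le> k1"
    by auto
  have "\<bar>(real k1 - real k0) * \<delta>\<bar> < 1"
    using window[OF k0] window[OF k1] by (simp add: algebra_simps abs_less_iff)
  then have "real k1 - real k0 < 1 / \<bar>\<delta>\<bar>"
    using le assms(1) by (simp add: abs_mult field_simps)
  moreover have "card K \<le> card {k0..k1}"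
    using sub by (intro card_mono) auto
  moreover have "real (card {k0..k1}) = real k1 - real k0 + 1"
    using le by simp
  ultimately show ?thesis
    by linarith
qed simp

lemma card_layers_le:
  fixes s :: real
  assumes "0 \<le> s"
  shows "(\<Sum>k\<in>{1..N}. if real k \<le> s then 1 else 0) \<le> s"
proof -
  have "(\<Sum>k\<in>{1..N}. if real k \<le> s then 1 else 0) = real (card ({1..N} \<inter> {k. real k \<le> s}))"
    by (simp add: sum.If_cases)
  also have "card ({1..N} \<inter> {k. real k \<le> s}) \<le> card {1..nat \<lfloor>s\<rfloor>}"
    by (intro card_mono) (auto simp: le_nat_floor)
  also have "real (card {1..nat \<lfloor>s\<rfloor>}) \<le> s"
    using assms by simp
  finally show ?thesis
    by simp
qed

lemma sum_power2_le: "(\<Sum>k\<in>{1..N}. (2::real) ^ k) \<le> 2 ^ Suc N"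
  by (induction N) (auto simp: atLeastAtMostSuc_conv)

lemma log2_sqrt: "0 < x \<Longrightarrow> log 2 (sqrt x) = log 2 x / 2"
  by (simp add: sqrt_def log_root)

lemma log2_affine_sqrt_le:
  fixes c d x :: real
  assumes "1 \<le> x" "0 \<le> c" "0 < d"
  shows "log 2 (c * sqrt x + d) \<le> log 2 x / 2 + log 2 (c + d)"
proof -
  have "1 \<le> sqrt x"
    using assms(1) by simp
  then have "c * sqrt x + d \<le> (c + d) * sqrt x"
    using assms(3) by (simp add: algebra_simps)
  then have "log 2 (c * sqrt x + d) \<le> log 2 ((c + d) * sqrt x)"
    using assms \<open>1 \<le> sqrt x\<close> by (intro log_mono) (auto intro: add_nonneg_pos)
  also have "\<dots> = log 2 x / 2 + log 2 (c + d)"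
    using assms by (simp add: log_mult log2_sqrt)
  finally show ?thesis .
qed

lemma sum_power2_Suc_le: "(\<Sum>j<k. (2::real) ^ Suc j) \<le> 2 * 2 ^ k"
  by (induction k) auto

lemma powr_divide_le_inverse_square:
  fixes M \<tau> :: real
  assumes M: "M > 0" and n: "n \<ge> 1" and le: "\<tau> + 2 * log 2 n \<le> log 2 M"
  shows "2 powr \<tau> / M \<le> 1 / (real n)\<^sup>2"
proof -
  have "2 powr (2 * log 2 n) = (2 powr (log 2 n)) powr 2"
    by (simp add: powr_powr mult.commute)
  also have "\<dots> = (real n)\<^sup>2"
    using n by simp
  finally have "2 powr \<tau> * (real n)\<^sup>2 = 2 powr (\<tau> + 2 * log 2 n)"
    by (simp add: powr_add)
  also have "\<dots> \<le> 2 powr (log 2 M)"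
    using le by simp
  also have "\<dots> = M"
    using M by simp
  finally show ?thesis
    using M n by (simp add: field_simps)
qed

lemma tendsto_ratio_half_log:
  fixes D :: "nat \<Rightarrow> real"
  assumes lower: "\<And>n. n \<ge> 1 \<Longrightarrow> log 2 n / 2 - C1 \<le> D n"
    and upper: "\<And>n. n \<ge> 1 \<Longrightarrow> D n \<le> log 2 n / 2 + C2"
  shows "(\<lambda>n. D n / ((1/2) * log 2 (real n))) \<longlonglongrightarrow> 1"
proof (rule tendsto_sandwich[of "\<lambda>n. 1 - 2 * C1 / log 2 (real n)" _ _
      "\<lambda>n. 1 + 2 * C2 / log 2 (real n)"])
  show "eventually (\<lambda>n. 1 - 2 * C1 / log 2 (real n) \<le> D n / ((1/2) * log 2 (real n))) sequentially"
    using eventually_ge_at_top[of 2]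
  proof eventually_elim
    case (elim n)
    have l: "log 2 (real n) > 0"
      using elim by simp
    have "(log 2 n / 2 - C1) / ((1/2) * log 2 n) \<le> D n / ((1/2) * log 2 n)"
      using lower[of n] elim l by (intro divide_right_mono) auto
    moreover have "(log 2 n / 2 - C1) / ((1/2) * log 2 n) = 1 - 2 * C1 / log 2 n"
      using l by (simp add: field_simps)
    ultimately show ?case
      by simp
  qed
  show "eventually (\<lambda>n. D n / ((1/2) * log 2 (real n)) \<le> 1 + 2 * C2 / log 2 (real n)) sequentially"
    using eventually_ge_at_top[of 2]
  proof eventually_elim
    case (elim n)
    have l: "log 2 (real n) > 0"
      using elim by simp
    have "D n / ((1/2) * log 2 n) \<le> (log 2 n / 2 + C2) / ((1/2) * log 2 n)"
      using upper[of n] elim l by (intro divide_right_mono) auto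
    moreover have "(log 2 n / 2 + C2) / ((1/2) * log 2 n) = 1 + 2 * C2 / log 2 n"
      using l by (simp add: field_simps)
    ultimately show ?case
      by simp
  qed
qed real_asymp+

locale iid_source =
  fixes L :: nat and Q :: "nat \<Rightarrow> real"
  assumes pos: "\<forall>a\<in>{1..L}. Q a > 0" and pmf: "(\<Sum>a\<in>{1..L}. Q a) = 1"
begin

abbreviation prob :: "nat list \<Rightarrow> real" where
  "prob \<equiv> iid Q"

definition selfinfo :: "nat list \<Rightarrow> real" where
  "selfinfo x = - log 2 (prob x)"

definition letter_info :: "nat \<Rightarrow> real" where
  "letter_info a = - log 2 (Q a)"

definition mean :: "(nat \<Rightarrow> real) \<Rightarrow> real" where
  "mean f = (\<Sum>a\<in>{1..L}. Q a * f a)"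

definition variance :: "(nat \<Rightarrow> real) \<Rightarrow> real" where
  "variance f = (\<Sum>a\<in>{1..L}. Q a * (f a - mean f)\<^sup>2)"

lemma sum_Q_eq_1 [simp]: "(\<Sum>a\<in>{Suc 0..L}. Q a) = 1"
  using pmf by simp

lemma Q_le_1: "a \<in> {1..L} \<Longrightarrow> Q a \<le> 1"
  using member_le_sum[of a "{1..L}" Q] pos pmf by (simp add: less_imp_le)

lemma obtain_letters_with_different_prob:
  assumes "\<exists>a\<in>{1..L}. Q a \<noteq> unif_L L a"
  obtains a b where "a \<in> {1..L}" "b \<in> {1..L}" "Q a \<noteq> Q b"
proof -
  obtain a where a: "a \<in> {1..L}" and "Q a \<noteq> 1 / real L"
    using assms by (auto simp: unif_L_def)
  moreover have "\<exists>b\<in>{1..L}. Q b \<noteq> Q a"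
  proof (rule ccontr)
    assume "\<not> ?thesis"
    then have "(\<Sum>b\<in>{1..L}. Q b) = (\<Sum>b\<in>{1..L}. Q a)"
      by (intro sum.cong) auto
    then have "real L * Q a = 1"
      using pmf by simp
    moreover have "real L \<noteq> 0"
      using a by auto
    ultimately show False
      using \<open>Q a \<noteq> 1 / real L\<close> by (simp add: field_simps)
  qed
  ultimately show ?thesis
    using that by blast
qed

lemma prob_pos_le_1: "set x \<subseteq> {1..L} \<Longrightarrow> 0 < prob x \<and> prob x \<le> 1"
proof (induction x)
  case (Cons a x)
  then have "0 < Q a" "Q a \<le> 1"
    using pos Q_le_1 by auto
  then show ?case
    using Cons by (simp add: mult_le_one)
qed simp

lemma prob_pos: "x \<in> words L n \<Longrightarrow> 0 < prob x"
  using prob_pos_le_1 by (auto simp: words_def)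

lemma prob_le_1: "x \<in> words L n \<Longrightarrow> prob x \<le> 1"
  using prob_pos_le_1 by (auto simp: words_def)

lemma sum_prob_words: "(\<Sum>x\<in>words L n. prob x) = 1"
  by (induction n) (simp_all add: words_0 sum_words_Suc sum_distrib_left[symmetric] pmf)

lemma sum_prob_le_1: "T \<subseteq> words L n \<Longrightarrow> (\<Sum>x\<in>T. prob x) \<le> 1"
  using sum_mono2[OF finite_words, of T L n prob] prob_pos by (force simp: sum_prob_words)

lemma selfinfo_nonneg: "x \<in> words L n \<Longrightarrow> 0 \<le> selfinfo x"
  using prob_pos[of x n] prob_le_1[of x n] by (simp add: selfinfo_def)

lemma prob_eq_powr: "x \<in> words L n \<Longrightarrow> prob x = 2 powr (- selfinfo x)"
  using prob_pos[of x n] by (simp add: selfinfo_def)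

lemma selfinfo_eq_sum_letter_info:
  assumes "x \<in> words L n"
  shows "selfinfo x = sum_list (map letter_info x)"
proof -
  have "set x \<subseteq> {1..L}"
    using assms by (simp add: words_def)
  then show ?thesis
  proof (induction x)
    case (Cons a x)
    then have "0 < Q a" and "0 < prob x"
      using pos prob_pos_le_1[of x] by auto
    then show ?case
      using Cons by (simp add: selfinfo_def letter_info_def log_mult)
  qed (simp add: selfinfo_def)
qed

lemma mean_letter_info: "mean letter_info = entropy_L L Q"
  by (simp add: mean_def letter_info_def entropy_L_def sum_negf)

lemma variance_nonneg: "0 \<le> variance f"
  unfolding variance_def using pos by (intro sum_nonneg mult_nonneg_nonneg) (auto intro: less_imp_le)

lemma expectation_sum_list: "(\<Sum>x\<in>words L n. prob x * sum_list (map f x)) = n * mean f"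
proof (induction n)
  case 0
  then show ?case by (simp add: words_0)
next
  case (Suc n)
  have "(\<Sum>x\<in>words L (Suc n). prob x * sum_list (map f x))
      = (\<Sum>a\<in>{1..L}. Q a * (f a * (\<Sum>x\<in>words L n. prob x)
          + (\<Sum>x\<in>words L n. prob x * sum_list (map f x))))"
    by (simp add: sum_words_Suc sum.distrib sum_distrib_left sum_distrib_right algebra_simps)
  also have "\<dots> = (\<Sum>a\<in>{1..L}. Q a * f a) + (\<Sum>a\<in>{1..L}. Q a) * (n * mean f)"
    using Suc by (simp add: sum_prob_words sum.distrib distrib_left flip: sum_distrib_right)
  also have "\<dots> = Suc n * mean f"
    by (simp add: pmf mean_def algebra_simps)
  finally show ?case .
qed

lemma expectation_sum_list_centered:
  "(\<Sum>x\<in>words L n. prob x * (sum_list (map f x) - n * mean f)) = 0"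
  by (simp add: right_diff_distrib sum_subtractf expectation_sum_list
      sum_distrib_right[symmetric] sum_prob_words)

lemma expectation_sum_list_sq_dev:
  "(\<Sum>x\<in>words L n. prob x * (sum_list (map f x) - n * mean f)\<^sup>2) = n * variance f"
proof (induction n)
  case 0
  then show ?case by (simp add: words_0)
next
  case (Suc n)
  define m where "m = mean f"
  define dev where "dev x = sum_list (map f x) - n * m" for x
  have "(\<Sum>x\<in>words L (Suc n). prob x * (sum_list (map f x) - Suc n * m)\<^sup>2)
      = (\<Sum>a\<in>{1..L}. \<Sum>x\<in>words L n.
          Q a * (prob x * (f a - m)\<^sup>2 + 2 * (f a - m) * (prob x * dev x) + prob x * (dev x)\<^sup>2))"
    unfolding sum_words_Suc dev_def
    by (intro sum.cong refl) (simp add: power2_eq_square algebra_simps)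
  also have "\<dots> = (\<Sum>a\<in>{1..L}. Q a * ((\<Sum>x\<in>words L n. prob x) * (f a - m)\<^sup>2
      + 2 * (f a - m) * (\<Sum>x\<in>words L n. prob x * dev x) + (\<Sum>x\<in>words L n. prob x * (dev x)\<^sup>2)))"
    by (simp add: sum.distrib sum_distrib_left[symmetric] sum_distrib_right[symmetric])
  also have "\<dots> = (\<Sum>a\<in>{1..L}. Q a * (f a - m)\<^sup>2 + Q a * (n * variance f))"
    using Suc expectation_sum_list_centered[of f n]
    by (simp add: sum_prob_words m_def dev_def algebra_simps)
  also have "\<dots> = (\<Sum>a\<in>{1..L}. Q a * (f a - m)\<^sup>2) + (\<Sum>a\<in>{1..L}. Q a) * (n * variance f)"
    by (simp add: sum.distrib flip: sum_distrib_right)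
  also have "\<dots> = Suc n * variance f"
    by (simp add: pmf variance_def m_def algebra_simps)
  finally show ?case
    by (simp add: m_def)
qed

lemma chebyshev_sum_list:
  assumes "R > 0"
  shows "(\<Sum>x\<in>{x\<in>words L n. R \<le> \<bar>sum_list (map f x) - n * mean f\<bar>}. prob x)
    \<le> n * variance f / R\<^sup>2"
proof -
  let ?dev = "\<lambda>x. sum_list (map f x) - n * mean f"
  have "(\<Sum>x\<in>{x\<in>words L n. R \<le> \<bar>?dev x\<bar>}. prob x)
      \<le> (\<Sum>x\<in>{x\<in>words L n. R \<le> \<bar>?dev x\<bar>}. prob x * (?dev x)\<^sup>2 / R\<^sup>2)"
  proof (intro sum_mono)
    fix x assume x: "x \<in> {x\<in>words L n. R \<le> \<bar>?dev x\<bar>}"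
    then have "R\<^sup>2 \<le> (?dev x)\<^sup>2"
      using assms by (metis abs_le_square_iff abs_of_pos mem_Collect_eq)
    then have "1 \<le> (?dev x)\<^sup>2 / R\<^sup>2"
      using assms by simp
    then have "prob x * 1 \<le> prob x * ((?dev x)\<^sup>2 / R\<^sup>2)"
      using prob_pos[of x n] x by (intro mult_left_mono) auto
    then show "prob x \<le> prob x * (?dev x)\<^sup>2 / R\<^sup>2"
      by simp
  qed
  also have "\<dots> \<le> (\<Sum>x\<in>words L n. prob x * (?dev x)\<^sup>2 / R\<^sup>2)"
    by (intro sum_mono2) (auto simp: finite_words intro!: divide_nonneg_pos mult_nonneg_nonneg
        less_imp_le[OF prob_pos] assms)
  also have "\<dots> = n * variance f / R\<^sup>2"
    by (simp add: sum_divide_distrib[symmetric] expectation_sum_list_sq_dev)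
  finally show ?thesis .
qed

lemma Dcode_eq_avg_selfinfo:
  assumes S: "S \<subseteq> words L n" "S \<noteq> {}"
  shows "Dcode L Q n S = (\<Sum>x\<in>S. selfinfo x) / card S - log 2 (card S)"
proof -
  have card_pos: "card S > 0"
    using S finite_subset[OF S(1) finite_words] by auto
  have support: "{x\<in>words L n. unif_set S x > 0} = S"
    using S card_pos by (auto simp: unif_set_def)
  have "Dcode L Q n S = (\<Sum>x\<in>S. (1 / card S) * (selfinfo x - log 2 (card S)))"
    unfolding Dcode_def divergence_def support
  proof (intro sum.cong refl)
    fix x assume x: "x \<in> S"
    then have "0 < prob x"
      using S prob_pos by auto
    then have "log 2 ((1 / card S) / prob x) = selfinfo x - log 2 (card S)"
      using card_pos by (simp add: selfinfo_def log_divide log_mult)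
    then show "unif_set S x * log 2 (unif_set S x / prob x)
        = 1 / card S * (selfinfo x - log 2 (card S))"
      using x by (simp add: unif_set_def)
  qed
  also have "\<dots> = (\<Sum>x\<in>S. selfinfo x) / card S - log 2 (card S)"
    using card_pos by (simp add: sum_distrib_left[symmetric] sum_subtractf diff_divide_distrib
        sum_divide_distrib)
  finally show ?thesis .
qed

lemma Dcode_ge_neg_log_card:
  assumes "S \<subseteq> words L n" "S \<noteq> {}"
  shows "- log 2 (card S) \<le> Dcode L Q n S"
proof -
  have "0 \<le> (\<Sum>x\<in>S. selfinfo x)"
    using assms selfinfo_nonneg by (intro sum_nonneg) auto
  then show ?thesis
    using Dcode_eq_avg_selfinfo[OF assms] by simp
qed

lemma card_le_powr_mass:
  assumes T: "T \<subseteq> words L n" and below: "\<And>x. x \<in> T \<Longrightarrow> selfinfo x < \<tau>"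
  shows "card T \<le> 2 powr \<tau> * (\<Sum>x\<in>T. prob x)"
proof -
  have "real (card T) = (\<Sum>x\<in>T. 1)"
    by simp
  also have "\<dots> \<le> (\<Sum>x\<in>T. 2 powr \<tau> * prob x)"
  proof (intro sum_mono)
    fix x assume x: "x \<in> T"
    have "2 powr \<tau> * prob x = 2 powr (\<tau> - selfinfo x)"
      using prob_eq_powr T x by (auto simp: powr_diff powr_minus_divide)
    also have "\<dots> \<ge> 1"
      using below[OF x] by (intro ge_one_powr_ge_zero) auto
    finally show "1 \<le> 2 powr \<tau> * prob x" .
  qed
  also have "\<dots> = 2 powr \<tau> * (\<Sum>x\<in>T. prob x)"
    by (simp add: sum_distrib_left)
  finally show ?thesis .
qed

lemma mass_le_card_powr:
  assumes "T \<subseteq> words L n" and "\<And>x. x \<in> T \<Longrightarrow> t \<le> selfinfo x"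
  shows "(\<Sum>x\<in>T. prob x) \<le> card T * 2 powr (- t)"
proof -
  have "(\<Sum>x\<in>T. prob x) \<le> (\<Sum>x\<in>T. 2 powr (- t))"
    using assms prob_eq_powr by (intro sum_mono) auto
  then show ?thesis
    by simp
qed

lemma sum_selfinfo_ge_layers:
  fixes G :: "nat \<Rightarrow> real"
  assumes S: "S \<subseteq> words L n"
    and G: "\<And>k. 1 \<le> k \<Longrightarrow> k \<le> N \<Longrightarrow> card {x\<in>S. selfinfo x < real k} \<le> G k"
  shows "(\<Sum>k\<in>{1..N}. card S - G k) \<le> (\<Sum>x\<in>S. selfinfo x)"
proof -
  have fin: "finite S"
    using S finite_words finite_subset by blast
  have "(\<Sum>k\<in>{1..N}. card S - G k) \<le> (\<Sum>k\<in>{1..N}. real (card {x\<in>S. real k \<le> selfinfo x}))"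
  proof (intro sum_mono)
    fix k assume k: "k \<in> {1..N}"
    have "S = {x\<in>S. real k \<le> selfinfo x} \<union> {x\<in>S. selfinfo x < real k}"
      by auto
    then have "card S \<le> card {x\<in>S. real k \<le> selfinfo x} + card {x\<in>S. selfinfo x < real k}"
      by (metis card_Un_le)
    then show "card S - G k \<le> real (card {x\<in>S. real k \<le> selfinfo x})"
      using G[of k] k by auto
  qed
  also have "\<dots> = (\<Sum>k\<in>{1..N}. \<Sum>x\<in>S. if real k \<le> selfinfo x then 1 else 0)"
    using fin by (simp add: sum.If_cases Int_def conj_commute)
  also have "\<dots> = (\<Sum>x\<in>S. \<Sum>k\<in>{1..N}. if real k \<le> selfinfo x then 1 else 0)"
    by (rule sum.swap)
  also have "\<dots> \<le> (\<Sum>x\<in>S. selfinfo x)"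
    by (intro sum_mono card_layers_le) (use S selfinfo_nonneg in auto)
  finally show ?thesis .
qed

lemma Dcode_ge_of_card_bound:
  fixes \<eta> B :: real
  assumes S: "S \<subseteq> words L n" "S \<noteq> {}" and \<eta>: "\<eta> > 0" and B: "B \<ge> 0"
    and few: "\<And>k::nat. 1 \<le> k \<Longrightarrow> k \<le> log 2 (card S / \<eta>) \<Longrightarrow>
                card {x\<in>S. selfinfo x < real k} \<le> B + \<eta> * 2 ^ k"
  shows "- log 2 \<eta> - 3 - max 0 (log 2 (card S / \<eta>)) * B / card S \<le> Dcode L Q n S"
proof -
  define M where "M = real (card S)"
  have M: "M \<ge> 1"
    using S finite_subset[OF S(1) finite_words] by (auto simp: M_def Suc_le_eq)
  have error_nonneg: "max 0 (log 2 (card S / \<eta>)) * B / card S \<ge> 0"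
    using B M by (simp add: M_def)
  show ?thesis
  proof (cases "M < \<eta>")
    case True
    then have "- log 2 \<eta> \<le> - log 2 M"
      using M by simp
    then show ?thesis
      using Dcode_ge_neg_log_card[OF S] error_nonneg by (simp add: M_def)
  next
    case False
    define l where "l = log 2 (M / \<eta>)"
    define N where "N = nat \<lfloor>l\<rfloor>"
    have l0: "l \<ge> 0"
      using False \<eta> by (simp add: l_def)
    then have N1: "real N \<le> l" "real N > l - 1"
      by (simp_all add: N_def)
    have "(2::real) ^ N = 2 powr real N"
      by (simp add: powr_realpow)
    also have "\<dots> \<le> 2 powr l"
      using N1 by simp
    also have "\<dots> = M / \<eta>"
      using M \<eta> by (simp add: l_def)
    finally have N2: "\<eta> * 2 ^ Suc N \<le> 2 * M"
      using \<eta> by (simp add: field_simps)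
    have "(\<Sum>k\<in>{1..N}. M - (B + \<eta> * 2 ^ k)) \<le> (\<Sum>x\<in>S. selfinfo x)"
      unfolding M_def using few N1 by (intro sum_selfinfo_ge_layers[OF S(1)]) (auto simp: l_def M_def)
    moreover have "(\<Sum>k\<in>{1..N}. M - (B + \<eta> * 2 ^ k)) = N * (M - B) - \<eta> * (\<Sum>k\<in>{1..N}. 2 ^ k)"
      by (simp add: sum_subtractf sum.distrib sum_distrib_left algebra_simps)
    moreover have "\<eta> * (\<Sum>k\<in>{1..N}. 2 ^ k) \<le> \<eta> * 2 ^ Suc N"
      using \<eta> sum_power2_le[of N] by (intro mult_left_mono) auto
    ultimately have "N * (M - B) - 2 * M \<le> (\<Sum>x\<in>S. selfinfo x)"
      using N2 by linarith
    then have "(N * (M - B) - 2 * M) / M \<le> (\<Sum>x\<in>S. selfinfo x) / M"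
      using M by (intro divide_right_mono) auto
    moreover have "(N * (M - B) - 2 * M) / M = N - N * B / M - 2"
      using M by (simp add: field_simps)
    moreover have "N * B / M \<le> l * B / M"
      using N1 B M by (intro divide_right_mono mult_right_mono) auto
    ultimately have "l - 3 - l * B / M \<le> (\<Sum>x\<in>S. selfinfo x) / M"
      using N1 by linarith
    moreover have "l = log 2 M - log 2 \<eta>"
      using M \<eta> by (simp add: l_def log_divide)
    ultimately have "- log 2 \<eta> - 3 - l * B / M \<le> Dcode L Q n S"
      using Dcode_eq_avg_selfinfo[OF S, folded M_def] by linarith
    then show ?thesis
      using l0 by (simp add: l_def M_def)
  qed
qed

lemma finite_Dcode_values: "finite {Dcode L Q n S | S. S \<noteq> {} \<and> S \<subseteq> words L n}"
proof -
  have "{Dcode L Q n S | S. S \<noteq> {} \<and> S \<subseteq> words L n} \<subseteq> Dcode L Q n ` Pow (words L n)"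
    by auto
  then show ?thesis
    using finite_words by (meson finite_Pow_iff finite_imageI finite_subset)
qed

lemma Dstar_le_Dcode: "S \<subseteq> words L n \<Longrightarrow> S \<noteq> {} \<Longrightarrow> Dstar L Q n \<le> Dcode L Q n S"
  unfolding Dstar_def by (intro Min_le finite_Dcode_values) auto

lemma Dstar_attained:
  assumes "L \<ge> 1"
  obtains S where "S \<subseteq> words L n" "S \<noteq> {}" "Dstar L Q n = Dcode L Q n S"
proof -
  have "replicate n 1 \<in> words L n"
    using assms by (auto simp: words_def)
  then have "{Dcode L Q n S | S. S \<noteq> {} \<and> S \<subseteq> words L n} \<noteq> {}"
    by blast
  then have "Dstar L Q n \<in> {Dcode L Q n S | S. S \<noteq> {} \<and> S \<subseteq> words L n}"
    unfolding Dstar_def using Min_in[OF finite_Dcode_values] by blast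
  then show ?thesis
    using that by blast
qed

section \<open>Upper bound on the optimal divergence\<close>

lemma mass_near_entropy_ge:
  assumes "R > 0"
  shows "1 - n * variance letter_info / R\<^sup>2
    \<le> (\<Sum>x\<in>{x\<in>words L n. \<bar>selfinfo x - n * mean letter_info\<bar> < R}. prob x)"
proof -
  let ?far = "{x\<in>words L n. R \<le> \<bar>sum_list (map letter_info x) - n * mean letter_info\<bar>}"
  have "{x\<in>words L n. \<bar>selfinfo x - n * mean letter_info\<bar> < R} = words L n - ?far"
    using selfinfo_eq_sum_letter_info by auto
  moreover have "(\<Sum>x\<in>words L n - ?far. prob x) = 1 - (\<Sum>x\<in>?far. prob x)"
    by (subst sum_diff) (auto simp: finite_words sum_prob_words)
  ultimately show ?thesis
    using chebyshev_sum_list[OF assms, where f = letter_info and n = n] by simp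
qed

text \<open>Pigeonhole over the \<open>\<lceil>2 R\<rceil>\<close> consecutive unit windows covering \<open>(c - R, c + R)\<close>.\<close>
lemma obtain_heavy_window:
  assumes "R > 0"
  obtains t where "(\<Sum>x\<in>{x\<in>words L n. \<bar>selfinfo x - c\<bar> < R}. prob x)
    \<le> nat \<lceil>2 * R\<rceil> * (\<Sum>x\<in>{x\<in>words L n. t \<le> selfinfo x \<and> selfinfo x < t + 1}. prob x)"
proof -
  define J where "J = nat \<lceil>2 * R\<rceil>"
  define near where "near = {x\<in>words L n. \<bar>selfinfo x - c\<bar> < R}"
  define window where
    "window j = {x\<in>words L n. c - R + j \<le> selfinfo x \<and> selfinfo x < c - R + j + 1}" for j :: nat
  have J: "J > 0" and "2 * R \<le> J"
    using assms le_of_int_ceiling[of "2 * R"] by (auto simp: J_def)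
  have "near \<subseteq> (\<Union>j<J. window j)"
  proof
    fix x assume x: "x \<in> near"
    define j where "j = nat \<lfloor>selfinfo x - c + R\<rfloor>"
    have "0 \<le> selfinfo x - c + R"
      using x by (auto simp: near_def)
    then have "real j = of_int \<lfloor>selfinfo x - c + R\<rfloor>"
      by (simp add: j_def)
    then have "real j \<le> selfinfo x - c + R" "selfinfo x - c + R < real j + 1"
      using floor_correct[of "selfinfo x - c + R"] by linarith+
    then show "x \<in> (\<Union>j<J. window j)"
      using x \<open>2 * R \<le> J\<close> by (auto simp: window_def near_def intro!: bexI[of _ j])
  qed
  moreover have "(\<Sum>x\<in>(\<Union>j<J. window j). prob x) = (\<Sum>j<J. \<Sum>x\<in>window j. prob x)"
    by (intro sum.UNION_disjoint) (auto simp: window_def finite_words)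
  ultimately have near_le: "(\<Sum>x\<in>near. prob x) \<le> (\<Sum>j<J. \<Sum>x\<in>window j. prob x)"
    using sum_mono2[of "\<Union>j<J. window j" near prob] prob_pos
    by (force simp: window_def finite_words)
  have "\<exists>j<J. (\<Sum>x\<in>near. prob x) \<le> J * (\<Sum>x\<in>window j. prob x)"
  proof (rule ccontr)
    assume "\<not> ?thesis"
    then have "(\<Sum>j<J. J * (\<Sum>x\<in>window j. prob x)) < (\<Sum>j<J. (\<Sum>x\<in>near. prob x))"
      using J by (intro sum_strict_mono) auto
    then have "J * (\<Sum>j<J. \<Sum>x\<in>window j. prob x) < J * (\<Sum>x\<in>near. prob x)"
      by (simp add: sum_distrib_left)
    then show False
      using near_le J by simp
  qed
  then obtain j where "(\<Sum>x\<in>near. prob x) \<le> J * (\<Sum>x\<in>window j. prob x)"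
    by blast
  then show ?thesis
    by (intro that[of "c - R + real j"]) (simp add: near_def window_def J_def)
qed

lemma Dcode_le_window:
  assumes S: "S \<subseteq> words L n" "S \<noteq> {}"
    and window: "\<And>x. x \<in> S \<Longrightarrow> t \<le> selfinfo x \<and> selfinfo x < t + 1"
  shows "Dcode L Q n S \<le> 1 - log 2 (\<Sum>x\<in>S. prob x)"
proof -
  define M where "M = real (card S)"
  have fin: "finite S"
    using S finite_words finite_subset by blast
  then have M: "M > 0"
    using S by (simp add: M_def card_gt_0_iff)
  have mass_pos: "0 < (\<Sum>x\<in>S. prob x)"
    using fin S prob_pos by (intro sum_pos) auto
  have "(\<Sum>x\<in>S. prob x) \<le> M * 2 powr (- t)"
    unfolding M_def using window by (intro mass_le_card_powr[OF S(1)]) auto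
  then have "log 2 (\<Sum>x\<in>S. prob x) \<le> log 2 (M * 2 powr (- t))"
    using mass_pos by simp
  also have "\<dots> = log 2 M - t"
    using M by (simp add: log_mult)
  finally have "log 2 (\<Sum>x\<in>S. prob x) + t \<le> log 2 M"
    by simp
  moreover have "(\<Sum>x\<in>S. selfinfo x) \<le> (\<Sum>x\<in>S. t + 1)"
    using window by (intro sum_mono) (simp add: less_imp_le)
  then have "(\<Sum>x\<in>S. selfinfo x) / M \<le> t + 1"
    using M by (simp add: M_def field_simps)
  ultimately show ?thesis
    using Dcode_eq_avg_selfinfo[OF S, folded M_def] by linarith
qed

lemma obtain_heavy_window_near_entropy:
  obtains t where "1 \<le> (4 * sqrt (2 * real n * variance letter_info) + 6)
    * (\<Sum>x\<in>{x\<in>words L n. t \<le> selfinfo x \<and> selfinfo x < t + 1}. prob x)"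
proof -
  define V where "V = variance letter_info"
  define R where "R = sqrt (2 * real n * V) + 1"
  define J where "J = nat \<lceil>2 * R\<rceil>"
  have V: "V \<ge> 0"
    by (simp add: V_def variance_nonneg)
  then have R: "R \<ge> 1"
    by (simp add: R_def)
  have "2 * real n * V = (sqrt (2 * real n * V))\<^sup>2"
    using V by simp
  also have "\<dots> \<le> R\<^sup>2"
    unfolding R_def using V by (intro power_mono) auto
  finally have "2 * real n * V \<le> R\<^sup>2" .
  moreover have "0 < R\<^sup>2"
    using R by simp
  ultimately have "n * V / R\<^sup>2 \<le> 1 / 2"
    by (subst pos_divide_le_eq) linarith+
  then have "1 / 2 \<le> 1 - n * V / R\<^sup>2"
    by simp
  also have "\<dots> \<le> (\<Sum>x\<in>{x\<in>words L n. \<bar>selfinfo x - n * mean letter_info\<bar> < R}. prob x)"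
    unfolding V_def using R by (intro mass_near_entropy_ge) auto
  also obtain t where "\<dots> \<le> J * (\<Sum>x\<in>{x\<in>words L n. t \<le> selfinfo x \<and> selfinfo x < t + 1}. prob x)"
    using obtain_heavy_window[of R] R unfolding J_def by auto
  also have "\<dots> \<le> (2 * R + 1) * (\<Sum>x\<in>{x\<in>words L n. t \<le> selfinfo x \<and> selfinfo x < t + 1}. prob x)"
    using R prob_pos by (intro mult_right_mono sum_nonneg) (auto simp: J_def less_imp_le)
  finally have "1 \<le> 2 * ((2 * R + 1)
      * (\<Sum>x\<in>{x\<in>words L n. t \<le> selfinfo x \<and> selfinfo x < t + 1}. prob x))"
    by linarith
  moreover have "4 * sqrt (2 * real n * variance letter_info) + 6 = 2 * (2 * R + 1)"
    by (simp add: R_def V_def)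
  ultimately show ?thesis
    by (intro that[of t]) (simp only: mult.assoc)
qed

lemma Dstar_le_half_log:
  assumes n: "n \<ge> 1"
  shows "Dstar L Q n \<le> log 2 n / 2 + 1 + log 2 (4 * sqrt (2 * variance letter_info) + 6)"
proof -
  define V where "V = variance letter_info"
  define K where "K = 4 * sqrt (2 * real n * V) + 6"
  obtain t where t: "1 \<le> K * (\<Sum>x\<in>{x\<in>words L n. t \<le> selfinfo x \<and> selfinfo x < t + 1}. prob x)"
    unfolding K_def V_def by (rule obtain_heavy_window_near_entropy)
  define S where "S = {x\<in>words L n. t \<le> selfinfo x \<and> selfinfo x < t + 1}"
  define q where "q = (\<Sum>x\<in>S. prob x)"
  have V: "V \<ge> 0"
    by (simp add: V_def variance_nonneg)
  then have K: "K > 0"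
    by (simp add: K_def add_nonneg_pos)
  have "1 \<le> q * K"
    using t unfolding S_def q_def by (simp only: mult.commute)
  then have mass: "1 / K \<le> q"
    by (simp add: pos_divide_le_eq[OF K])
  have inv_pos: "0 < 1 / K"
    using K by simp
  then have q_pos: "0 < q"
    using mass by linarith
  then have "S \<noteq> {}"
    by (auto simp: q_def)
  then have "Dcode L Q n S \<le> 1 - log 2 q"
    unfolding q_def by (intro Dcode_le_window) (auto simp: S_def)
  also have "\<dots> \<le> 1 + log 2 K"
  proof -
    have "log 2 (1 / K) \<le> log 2 q"
      using mass by (subst log_le_cancel_iff[OF _ inv_pos q_pos]) auto
    moreover have "log 2 (1 / K) = - log 2 K"
      using K by (simp add: log_divide)
    ultimately show ?thesis
      by linarith
  qed
  also have "\<dots> \<le> 1 + (log 2 n / 2 + log 2 (4 * sqrt (2 * V) + 6))"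
  proof -
    have "K = 4 * sqrt (2 * V) * sqrt n + 6"
      by (simp add: K_def real_sqrt_mult mult_ac)
    then show ?thesis
      using n V by (simp add: log2_affine_sqrt_le)
  qed
  finally show ?thesis
    using Dstar_le_Dcode[of S n] \<open>S \<noteq> {}\<close> by (simp add: S_def V_def)
qed

section \<open>Rate of near-optimal codebooks\<close>

lemma mass_far_from_entropy_le:
  assumes \<delta>: "\<delta> > 0" and n: "n \<ge> 1" and T: "T \<subseteq> words L n"
    and far: "\<And>x. x \<in> T \<Longrightarrow> n * \<delta> \<le> \<bar>selfinfo x - n * mean letter_info\<bar>"
  shows "(\<Sum>x\<in>T. prob x) \<le> (variance letter_info + 1) / (n * \<delta>\<^sup>2)"
proof -
  have n\<delta>: "real n * \<delta> > 0"
    using \<delta> n by simp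
  have "(\<Sum>x\<in>T. prob x)
      \<le> (\<Sum>x\<in>{x\<in>words L n. n * \<delta> \<le> \<bar>sum_list (map letter_info x) - n * mean letter_info\<bar>}. prob x)"
  proof (intro sum_mono2)
    show "T \<subseteq> {x\<in>words L n. n * \<delta> \<le> \<bar>sum_list (map letter_info x) - n * mean letter_info\<bar>}"
      using T far selfinfo_eq_sum_letter_info by force
  qed (auto simp: finite_words intro: less_imp_le prob_pos)
  also have "\<dots> \<le> n * variance letter_info / (n * \<delta>)\<^sup>2"
    by (rule chebyshev_sum_list[OF n\<delta>])
  also have "\<dots> = variance letter_info / (n * \<delta>\<^sup>2)"
    using n \<delta> by (simp add: power2_eq_square field_simps)
  also have "\<dots> \<le> (variance letter_info + 1) / (n * \<delta>\<^sup>2)"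
    using n \<delta> by (intro divide_right_mono) auto
  finally show ?thesis .
qed

lemma Dcode_ge_if_log_card_small:
  assumes \<delta>: "\<delta> > 0" and n: "n \<ge> 1" and S: "S \<subseteq> words L n" "S \<noteq> {}"
    and small: "log 2 (card S) \<le> n * (mean letter_info - \<delta>) + log 2 ((variance letter_info + 1) / (n * \<delta>\<^sup>2))"
  shows "- log 2 ((variance letter_info + 1) / (n * \<delta>\<^sup>2)) - 3 \<le> Dcode L Q n S"
proof -
  define \<eta> where "\<eta> = (variance letter_info + 1) / (n * \<delta>\<^sup>2)"
  have \<eta>: "\<eta> > 0"
    using variance_nonneg[of letter_info] n \<delta> by (simp add: \<eta>_def)
  have card_pos: "card S > 0"
    using S finite_subset[OF S(1) finite_words] by auto
  have "- log 2 \<eta> - 3 - max 0 (log 2 (card S / \<eta>)) * 0 / card S \<le> Dcode L Q n S"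
  proof (rule Dcode_ge_of_card_bound[OF S \<eta>])
    fix k :: nat assume k: "k \<le> log 2 (card S / \<eta>)"
    have "log 2 (card S / \<eta>) = log 2 (card S) - log 2 \<eta>"
      using card_pos \<eta> by (simp add: log_divide)
    then have k_small: "k \<le> n * (mean letter_info - \<delta>)"
      using k small by (simp add: \<eta>_def)
    have "card {x\<in>S. selfinfo x < k} \<le> card {x\<in>words L n. selfinfo x < k}"
      using S by (intro card_mono) (auto simp: finite_words)
    then have "real (card {x\<in>S. selfinfo x < k}) \<le> card {x\<in>words L n. selfinfo x < k}"
      by simp
    also have "\<dots> \<le> 2 powr k * (\<Sum>x\<in>{x\<in>words L n. selfinfo x < k}. prob x)"
      by (rule card_le_powr_mass) auto
    also have "\<dots> \<le> 2 powr k * \<eta>"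
      unfolding \<eta>_def using k_small
      by (intro mult_left_mono mass_far_from_entropy_le[OF \<delta> n]) (auto simp: algebra_simps)
    finally show "card {x\<in>S. selfinfo x < k} \<le> 0 + \<eta> * 2 ^ k"
      by (simp add: powr_realpow mult_ac)
  qed simp
  then show ?thesis
    by (simp add: \<eta>_def)
qed

lemma Dcode_ge_via_typical_set:
  assumes \<delta>: "\<delta> > 0" and n: "n \<ge> 1" and S: "S \<subseteq> words L n" "S \<noteq> {}"
  defines "\<eta> \<equiv> (variance letter_info + 1) / (n * \<delta>\<^sup>2)"
  shows "- log 2 \<eta> - 3 - max 0 (log 2 (card S / \<eta>)) * 2 powr (n * (mean letter_info + \<delta>)) / card S
    \<le> Dcode L Q n S"
proof (rule Dcode_ge_of_card_bound[OF S])
  show "\<eta> > 0"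
    using variance_nonneg[of letter_info] n \<delta> by (simp add: \<eta>_def)
  fix k :: nat
  define \<tau> where "\<tau> = n * (mean letter_info + \<delta>)"
  define typical where "typical = {x\<in>words L n. selfinfo x < \<tau>}"
  define above where "above = {x\<in>words L n. \<tau> \<le> selfinfo x \<and> selfinfo x < k}"
  have "card {x\<in>S. selfinfo x < k} \<le> card (typical \<union> above)"
    using S by (intro card_mono) (auto simp: finite_words typical_def above_def)
  also have "\<dots> \<le> card typical + card above"
    by (rule card_Un_le)
  finally have "real (card {x\<in>S. selfinfo x < k}) \<le> card typical + card above"
    by simp
  moreover have "card typical \<le> 2 powr \<tau>"
  proof -
    have "card typical \<le> 2 powr \<tau> * (\<Sum>x\<in>typical. prob x)"
      by (rule card_le_powr_mass) (auto simp: typical_def)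
    also have "\<dots> \<le> 2 powr \<tau>"
      using sum_prob_le_1[of typical n] by (simp add: typical_def mult_left_le)
    finally show ?thesis .
  qed
  moreover have "card above \<le> \<eta> * 2 ^ k"
  proof -
    have "card above \<le> 2 powr k * (\<Sum>x\<in>above. prob x)"
      by (rule card_le_powr_mass) (auto simp: above_def)
    also have "\<dots> \<le> 2 powr k * \<eta>"
      unfolding \<eta>_def
      by (intro mult_left_mono mass_far_from_entropy_le[OF \<delta> n]) (auto simp: above_def \<tau>_def algebra_simps)
    finally show ?thesis
      by (simp add: powr_realpow mult_ac)
  qed
  ultimately show "card {x\<in>S. selfinfo x < k} \<le> 2 powr (n * (mean letter_info + \<delta>)) + \<eta> * 2 ^ k"
    unfolding \<tau>_def by linarith
qed simp

lemma eventually_rate_gt: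
  assumes \<delta>: "\<delta> > 0"
    and S: "\<And>n. n \<ge> 1 \<Longrightarrow> S n \<subseteq> words L n \<and> S n \<noteq> {} \<and> Dcode L Q n (S n) \<le> log 2 n / 2 + C"
  shows "eventually (\<lambda>n. mean letter_info - 2 * \<delta> < log 2 (card (S n)) / n) sequentially"
proof -
  define V1 where "V1 = variance letter_info + 1"
  have V1: "V1 > 0"
    using variance_nonneg[of letter_info] by (simp add: V1_def)
  have "eventually (\<lambda>n. C + 3 + log 2 V1 - 2 * log 2 \<delta> < log 2 (real n) / 2) sequentially"
    by real_asymp
  moreover have "eventually (\<lambda>n. - \<delta> < (log 2 V1 - log 2 (real n) - 2 * log 2 \<delta>) / real n) sequentially"
    using \<delta> by real_asymp
  ultimately show ?thesis
    using eventually_ge_at_top[of 1]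
  proof eventually_elim
    case (elim n)
    then have n: "n \<ge> 1"
      by simp
    define \<eta> where "\<eta> = V1 / (n * \<delta>\<^sup>2)"
    have log_\<eta>: "log 2 \<eta> = log 2 V1 - log 2 n - 2 * log 2 \<delta>"
      using V1 n \<delta> by (simp add: \<eta>_def log_divide log_mult log_nat_power)
    have "n * (mean letter_info - \<delta>) + log 2 \<eta> < log 2 (card (S n))"
    proof (rule ccontr)
      assume "\<not> ?thesis"
      then have "- log 2 \<eta> - 3 \<le> Dcode L Q n (S n)"
        using Dcode_ge_if_log_card_small[OF \<delta> n] S[OF n] by (simp add: \<eta>_def V1_def)
      then show False
        using S[OF n] log_\<eta> elim(1) by linarith
    qed
    then have "(n * (mean letter_info - \<delta>) + log 2 \<eta>) / n < log 2 (card (S n)) / n"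
      using n by (intro divide_strict_right_mono) auto
    moreover have "mean letter_info - 2 * \<delta> < (n * (mean letter_info - \<delta>) + log 2 \<eta>) / n"
    proof -
      have "mean letter_info - 2 * \<delta> < mean letter_info - \<delta> + (log 2 V1 - log 2 n - 2 * log 2 \<delta>) / n"
        using elim(2) by linarith
      also have "\<dots> = (n * (mean letter_info - \<delta>) + log 2 \<eta>) / n"
        using n by (simp add: log_\<eta> field_simps)
      finally show ?thesis .
    qed
    ultimately show ?case
      by linarith
  qed
qed

lemma Dcode_ge_if_log_card_large:
  assumes \<delta>: "\<delta> > 0" and n: "n \<ge> 1" and S: "S \<subseteq> words L n" "S \<noteq> {}"
    and large: "n * (mean letter_info + \<delta>) + 2 * log 2 n \<le> log 2 (card S)"
  defines "\<eta> \<equiv> (variance letter_info + 1) / (n * \<delta>\<^sup>2)"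
    and "Z \<equiv> n * log 2 L + \<bar>log 2 (variance letter_info + 1)\<bar> + \<bar>2 * log 2 \<delta>\<bar> + log 2 n"
  shows "- log 2 \<eta> - 3 - Z / (real n)\<^sup>2 \<le> Dcode L Q n S"
proof -
  define M where "M = real (card S)"
  have "finite S"
    using S finite_words finite_subset by blast
  then have M: "M \<ge> 1"
    using S by (simp add: M_def Suc_le_eq card_gt_0_iff)
  have \<eta>: "\<eta> > 0" and log_\<eta>: "log 2 \<eta> = log 2 (variance letter_info + 1) - log 2 n - 2 * log 2 \<delta>"
    using variance_nonneg[of letter_info] n \<delta>
    by (simp_all add: \<eta>_def log_divide log_mult log_nat_power add_nonneg_pos)
  have M_le: "M \<le> real L ^ n"
    using S card_mono[OF finite_words, of S L n] by (simp add: M_def card_words flip: of_nat_power)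
  then have "L > 0"
    using M n by (cases L) (auto simp: power_0_left)
  have "log 2 M \<le> log 2 (real L ^ n)"
    using M M_le by (intro log_mono) auto
  then have "log 2 (M / \<eta>) \<le> Z"
    using M \<eta> \<open>L > 0\<close> by (simp add: Z_def log_divide log_\<eta> log_nat_power)
  moreover have "0 \<le> Z"
    using \<open>L > 0\<close> n by (simp add: Z_def)
  ultimately have "max 0 (log 2 (M / \<eta>)) \<le> Z"
    by simp
  moreover have "2 powr (n * (mean letter_info + \<delta>)) / M \<le> 1 / (real n)\<^sup>2"
    using M n large by (intro powr_divide_le_inverse_square) (auto simp: M_def)
  ultimately have "max 0 (log 2 (M / \<eta>)) * (2 powr (n * (mean letter_info + \<delta>)) / M)
      \<le> Z * (1 / (real n)\<^sup>2)"
    using M by (intro mult_mono) auto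
  moreover have "- log 2 \<eta> - 3
      - max 0 (log 2 (M / \<eta>)) * 2 powr (n * (mean letter_info + \<delta>)) / M \<le> Dcode L Q n S"
    using Dcode_ge_via_typical_set[OF \<delta> n S] unfolding M_def \<eta>_def .
  ultimately show ?thesis
    by simp
qed

lemma eventually_rate_lt:
  assumes \<delta>: "\<delta> > 0"
    and S: "\<And>n. n \<ge> 1 \<Longrightarrow> S n \<subseteq> words L n \<and> S n \<noteq> {} \<and> Dcode L Q n (S n) \<le> log 2 n / 2 + C"
  shows "eventually (\<lambda>n. log 2 (card (S n)) / n < mean letter_info + 2 * \<delta>) sequentially"
proof -
  define V1 where "V1 = variance letter_info + 1"
  define B where "B = \<bar>log 2 V1\<bar> + \<bar>2 * log 2 \<delta>\<bar>"
  have V1: "V1 > 0"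
    using variance_nonneg[of letter_info] by (simp add: V1_def)
  have "eventually (\<lambda>n. C < log 2 (real n) / 2 + (2 * log 2 \<delta> - log 2 V1 - 3)
      - (real n * log 2 L + B + log 2 (real n)) / (real n)\<^sup>2) sequentially"
    by real_asymp
  moreover have "eventually (\<lambda>n. 2 * log 2 (real n) / real n < \<delta>) sequentially"
    using \<delta> by real_asymp
  ultimately show ?thesis
    using eventually_ge_at_top[of 1]
  proof eventually_elim
    case (elim n)
    then have n: "n \<ge> 1"
      by simp
    have "log 2 (card (S n)) < n * (mean letter_info + \<delta>) + 2 * log 2 n"
    proof (rule ccontr)
      assume "\<not> ?thesis"
      then have "- log 2 (V1 / (n * \<delta>\<^sup>2)) - 3 - (n * log 2 L + B + log 2 n) / (real n)\<^sup>2
          \<le> Dcode L Q n (S n)"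
        using Dcode_ge_if_log_card_large[OF \<delta> n] S[OF n] by (simp add: V1_def B_def add.assoc)
      moreover have "log 2 (V1 / (n * \<delta>\<^sup>2)) = log 2 V1 - log 2 n - 2 * log 2 \<delta>"
        using V1 n \<delta> by (simp add: log_divide log_mult log_nat_power)
      ultimately show False
        using S[OF n] elim(1) by linarith
    qed
    then have "log 2 (card (S n)) / n < (n * (mean letter_info + \<delta>) + 2 * log 2 n) / n"
      using n by (intro divide_strict_right_mono) auto
    also have "\<dots> = mean letter_info + \<delta> + 2 * log 2 n / n"
      using n by (simp add: field_simps)
    finally show ?case
      using elim(2) by simp
  qed
qed

lemma rate_tendsto_entropy:
  assumes "\<And>n. n \<ge> 1 \<Longrightarrow> S n \<subseteq> words L n \<and> S n \<noteq> {} \<and> Dcode L Q n (S n) \<le> log 2 n / 2 + C"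
  shows "(\<lambda>n. log 2 (card (S n)) / n) \<longlonglongrightarrow> entropy_L L Q"
  unfolding mean_letter_info[symmetric]
proof (rule tendstoI)
  fix e :: real
  assume "e > 0"
  then have "e / 3 > 0"
    by simp
  show "eventually (\<lambda>n. dist (log 2 (card (S n)) / n) (mean letter_info) < e) sequentially"
    using eventually_conj[OF eventually_rate_gt[OF \<open>e / 3 > 0\<close> assms]
        eventually_rate_lt[OF \<open>e / 3 > 0\<close> assms]]
    by (rule eventually_mono) (use \<open>e > 0\<close> in \<open>auto simp: dist_real_def abs_less_iff\<close>)
qed

end

section \<open>Anticoncentration of the self-information\<close>

locale letter_pair = iid_source +
  fixes a b :: nat
  assumes a: "a \<in> {1..L}" and b: "b \<in> {1..L}" and Q_a_ne_Q_b: "Q a \<noteq> Q b"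
begin

definition q_ab :: real where
  "q_ab = Q a + Q b"

definition r_a :: real where
  "r_a = Q a / q_ab"

definition n_ab :: "nat list \<Rightarrow> nat" where
  "n_ab x = length (filter (\<lambda>z. z = a \<or> z = b) x)"

definition n_a :: "nat list \<Rightarrow> nat" where
  "n_a x = length (filter (\<lambda>z. z = a) x)"

definition rest_prob :: "nat list \<Rightarrow> real" where
  "rest_prob x = prod_list (map Q (filter (\<lambda>z. z \<noteq> a \<and> z \<noteq> b) x))"

definition binom_mix :: "(real \<Rightarrow> nat \<Rightarrow> nat \<Rightarrow> real) \<Rightarrow> nat list \<Rightarrow> real" where
  "binom_mix h x = (\<Sum>k\<le>n_ab x. binom_prob (n_ab x) r_a k * h (rest_prob x) (n_ab x) k)"

lemma a_ne_b: "a \<noteq> b"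
  using Q_a_ne_Q_b by auto

lemma Q_a_pos: "Q a > 0" and Q_b_pos: "Q b > 0"
  using pos a b by auto

lemma r_a_bounds: "0 < r_a" "r_a < 1"
  using Q_a_pos Q_b_pos by (auto simp: r_a_def q_ab_def field_simps)

lemma Q_a_eq: "Q a = q_ab * r_a" and Q_b_eq: "Q b = q_ab * (1 - r_a)"
  using Q_a_pos Q_b_pos by (auto simp: r_a_def q_ab_def field_simps)

lemma n_ab_Cons: "n_ab (z # x) = (if z = a \<or> z = b then Suc (n_ab x) else n_ab x)"
  by (simp add: n_ab_def)

lemma n_a_Cons: "n_a (z # x) = (if z = a then Suc (n_a x) else n_a x)"
  by (simp add: n_a_def)

lemma rest_prob_Cons: "rest_prob (z # x) = (if z = a \<or> z = b then rest_prob x else Q z * rest_prob x)"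
  by (auto simp: rest_prob_def)

lemma n_a_le_n_ab: "n_a x \<le> n_ab x"
  by (induction x) (auto simp: n_ab_def n_a_def)

lemma rest_prob_pos: "set x \<subseteq> {1..L} \<Longrightarrow> rest_prob x > 0"
  by (induction x) (use pos in \<open>auto simp: rest_prob_Cons rest_prob_def\<close>)

lemma prob_eq_rest_prob: "prob x = rest_prob x * Q a ^ n_a x * Q b ^ (n_ab x - n_a x)"
proof (induction x)
  case (Cons z x)
  have "n_a x \<le> n_ab x"
    by (rule n_a_le_n_ab)
  then have "Suc (n_ab x) - n_a x = Suc (n_ab x - n_a x)"
    by simp
  then show ?case
    using Cons a_ne_b by (auto simp: n_ab_Cons n_a_Cons rest_prob_Cons algebra_simps)
qed (simp add: rest_prob_def n_a_def n_ab_def)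

lemma binom_mix_Cons_ab:
  assumes "z = a \<or> z = b"
  shows "binom_mix h (z # x) = r_a * binom_mix (\<lambda>u m k. h u (Suc m) (Suc k)) x
    + (1 - r_a) * binom_mix (\<lambda>u m k. h u (Suc m) k) x"
  using assms
  by (simp add: binom_mix_def n_ab_Cons rest_prob_Cons sum_binom_prob_Suc distrib_left
      sum.distrib sum_distrib_left mult_ac del: sum.atMost_Suc)

text \<open>Conditionally on the positions of the letters \<open>a\<close> and \<open>b\<close>, the number of \<open>a\<close>'s among
  them is binomial with parameters \<open>n_ab x\<close> and \<open>r_a\<close>.\<close>
lemma expectation_binom_mix:
  "(\<Sum>x\<in>words L n. prob x * h (rest_prob x) (n_ab x) (n_a x))
    = (\<Sum>x\<in>words L n. prob x * binom_mix h x)"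
proof (induction n arbitrary: h)
  case 0
  show ?case
    by (simp add: words_0 n_ab_def n_a_def binom_mix_def binom_prob_def)
next
  case (Suc n)
  define f where "f z = (\<Sum>x\<in>words L n. prob (z # x) * h (rest_prob (z # x)) (n_ab (z # x)) (n_a (z # x)))"
    for z
  define g where "g z = (\<Sum>x\<in>words L n. prob (z # x) * binom_mix h (z # x))" for z
  have other: "f z = g z" if "z \<noteq> a" "z \<noteq> b" for z
  proof -
    have "f z = Q z * (\<Sum>x\<in>words L n. prob x * h (Q z * rest_prob x) (n_ab x) (n_a x))"
      using that by (simp add: f_def n_ab_Cons n_a_Cons rest_prob_Cons sum_distrib_left mult_ac)
    also have "\<dots> = Q z * (\<Sum>x\<in>words L n. prob x * binom_mix (\<lambda>u. h (Q z * u)) x)"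
      using Suc.IH[of "\<lambda>u. h (Q z * u)"] by simp
    also have "\<dots> = g z"
      using that by (simp add: g_def binom_mix_def n_ab_Cons rest_prob_Cons sum_distrib_left mult_ac)
    finally show ?thesis .
  qed
  define h\<^sub>a where "h\<^sub>a = (\<lambda>u m k. h u (Suc m) (Suc k))"
  define h\<^sub>b where "h\<^sub>b = (\<lambda>u m k. h u (Suc m) k)"
  have Cons_ab: "binom_mix h (z # x) = r_a * binom_mix h\<^sub>a x + (1 - r_a) * binom_mix h\<^sub>b x"
    if "z = a \<or> z = b" for z x
    unfolding h\<^sub>a_def h\<^sub>b_def by (rule binom_mix_Cons_ab[OF that])
  define A where "A = (\<Sum>x\<in>words L n. prob x * binom_mix h\<^sub>a x)"
  define B where "B = (\<Sum>x\<in>words L n. prob x * binom_mix h\<^sub>b x)"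
  have "f a = Q a * (\<Sum>x\<in>words L n. prob x * h (rest_prob x) (Suc (n_ab x)) (Suc (n_a x)))"
    by (simp add: f_def n_ab_Cons n_a_Cons rest_prob_Cons sum_distrib_left mult_ac)
  also have "\<dots> = Q a * A"
    using Suc.IH[of h\<^sub>a] by (simp add: A_def h\<^sub>a_def)
  finally have fa: "f a = Q a * A" .
  have "f b = Q b * (\<Sum>x\<in>words L n. prob x * h (rest_prob x) (Suc (n_ab x)) (n_a x))"
    using a_ne_b by (simp add: f_def n_ab_Cons n_a_Cons rest_prob_Cons sum_distrib_left mult_ac)
  also have "\<dots> = Q b * B"
    using Suc.IH[of h\<^sub>b] by (simp add: B_def h\<^sub>b_def)
  finally have fb: "f b = Q b * B" .
  have g_ab: "g z = Q z * (r_a * A + (1 - r_a) * B)" if "z = a \<or> z = b" for z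
  proof -
    have "g z = Q z * (\<Sum>x\<in>words L n. prob x * (r_a * binom_mix h\<^sub>a x + (1 - r_a) * binom_mix h\<^sub>b x))"
      using that by (simp add: g_def Cons_ab sum_distrib_left mult_ac)
    also have "\<dots> = Q z * (r_a * A + (1 - r_a) * B)"
      by (simp add: A_def B_def distrib_left sum.distrib sum_distrib_left mult_ac)
    finally show ?thesis .
  qed
  have pair: "f a + f b = g a + g b"
    using fa fb g_ab[of a] g_ab[of b] by (simp add: Q_a_eq Q_b_eq algebra_simps)
  have split: "(\<Sum>z\<in>{1..L}. F z) = F a + F b + (\<Sum>z\<in>{1..L} - {a} - {b}. F z)"
    for F :: "nat \<Rightarrow> real"
    using a b a_ne_b by (simp add: sum.remove)
  have "(\<Sum>z\<in>{1..L} - {a} - {b}. f z) = (\<Sum>z\<in>{1..L} - {a} - {b}. g z)"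
    using other by (intro sum.cong) auto
  then show ?case
    using pair split[of f] split[of g] by (simp add: sum_words_Suc f_def g_def)
qed

definition log_ratio :: real where
  "log_ratio = log 2 (Q a) - log 2 (Q b)"

definition info_base :: "real \<Rightarrow> nat \<Rightarrow> real" where
  "info_base u m = - log 2 u - m * log 2 (Q b)"

definition in_window :: "real \<Rightarrow> real \<Rightarrow> nat \<Rightarrow> nat \<Rightarrow> real" where
  "in_window t u m k =
    (if t \<le> info_base u m - k * log_ratio \<and> info_base u m - k * log_ratio < t + 1 then 1 else 0)"

definition c_window :: real where
  "c_window = 4 * (1 / \<bar>log_ratio\<bar> + 1) / sqrt (r_a * (1 - r_a))"

definition window_bound :: "nat \<Rightarrow> real" where
  "window_bound m = (if m = 0 then 1 else min 1 (c_window / sqrt m))"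

definition is_ab :: "nat \<Rightarrow> real" where
  "is_ab z = (if z = a \<or> z = b then 1 else 0)"

definition c_anticonc :: real where
  "c_anticonc = 4 * variance is_ab / q_ab\<^sup>2 + c_window * sqrt 2 / sqrt q_ab"

lemma log_ratio_ne_0: "log_ratio \<noteq> 0"
  using Q_a_ne_Q_b Q_a_pos Q_b_pos log_inj[of 2] by (auto simp: log_ratio_def inj_on_def)

lemma q_ab_pos: "q_ab > 0"
  using Q_a_pos Q_b_pos by (simp add: q_ab_def)

lemma c_window_pos: "c_window > 0"
proof -
  have "sqrt (r_a * (1 - r_a)) > 0"
    using r_a_bounds by simp
  moreover have "4 * (1 / \<bar>log_ratio\<bar> + 1) > 0"
    by (intro mult_pos_pos add_nonneg_pos) auto
  ultimately show ?thesis
    unfolding c_window_def by simp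
qed

lemma c_anticonc_pos: "c_anticonc > 0"
  using variance_nonneg[of is_ab] c_window_pos q_ab_pos by (simp add: c_anticonc_def add_nonneg_pos)

lemma selfinfo_eq_affine:
  assumes "x \<in> words L n"
  shows "selfinfo x = info_base (rest_prob x) (n_ab x) - n_a x * log_ratio"
proof -
  have "rest_prob x > 0"
    using assms rest_prob_pos by (auto simp: words_def)
  then have "selfinfo x
      = - (log 2 (rest_prob x) + n_a x * log 2 (Q a) + (n_ab x - n_a x) * log 2 (Q b))"
    using Q_a_pos Q_b_pos by (simp add: selfinfo_def prob_eq_rest_prob log_mult log_nat_power)
  then show ?thesis
    using n_a_le_n_ab[of x] by (simp add: info_base_def log_ratio_def algebra_simps)
qed

lemma window_mass_eq:
  "(\<Sum>x\<in>{x\<in>words L n. t \<le> selfinfo x \<and> selfinfo x < t + 1}. prob x)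
    = (\<Sum>x\<in>words L n. prob x * in_window t (rest_prob x) (n_ab x) (n_a x))"
proof -
  have "(\<Sum>x\<in>words L n. prob x * in_window t (rest_prob x) (n_ab x) (n_a x))
      = (\<Sum>x\<in>words L n. if t \<le> selfinfo x \<and> selfinfo x < t + 1 then prob x else 0)"
    by (intro sum.cong refl) (simp add: in_window_def selfinfo_eq_affine)
  then show ?thesis
    by (simp add: sum.inter_filter finite_words)
qed

text \<open>The values \<open>info_base u m - k log_ratio\<close> in a unit window come from at most
  \<open>1 / |log_ratio| + 1\<close> values of \<open>k\<close>, each of binomial probability \<open>O(1 / sqrt m)\<close>.\<close>
lemma binom_mix_in_window_le: "binom_mix (in_window t) x \<le> window_bound (n_ab x)"
proof -
  define m where "m = n_ab x"
  define u where "u = rest_prob x"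
  have "binom_mix (in_window t) x \<le> (\<Sum>k\<le>m. binom_prob m r_a k)"
    unfolding binom_mix_def m_def
    by (intro sum_mono) (use binom_prob_nonneg r_a_bounds in \<open>auto simp: in_window_def\<close>)
  then have le_1: "binom_mix (in_window t) x \<le> 1"
    by (simp add: sum_binom_prob)
  have "binom_mix (in_window t) x \<le> c_window / sqrt m" if m: "m \<ge> 1"
  proof -
    define K where "K = {k\<in>{..m}. in_window t u m k = 1}"
    have "binom_mix (in_window t) x = (\<Sum>k\<le>m. if in_window t u m k = 1 then binom_prob m r_a k else 0)"
      unfolding binom_mix_def m_def u_def by (intro sum.cong) (auto simp: in_window_def)
    also have "\<dots> = (\<Sum>k\<in>K. binom_prob m r_a k)"
      unfolding K_def by (rule sum.inter_filter[symmetric]) simp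
    also have "\<dots> \<le> (\<Sum>k\<in>K. 4 / sqrt (m * r_a * (1 - r_a)))"
      by (intro sum_mono binom_prob_le_sqrt) (use r_a_bounds m in \<open>auto simp: K_def\<close>)
    also have "\<dots> = card K * (4 / sqrt (m * r_a * (1 - r_a)))"
      by simp
    also have "\<dots> \<le> (1 / \<bar>log_ratio\<bar> + 1) * (4 / sqrt (m * r_a * (1 - r_a)))"
      using r_a_bounds
      by (intro mult_right_mono card_unit_window_le[OF log_ratio_ne_0])
        (auto simp: K_def in_window_def split: if_splits)
    also have "\<dots> = c_window / sqrt m"
    proof -
      have "sqrt (m * r_a * (1 - r_a)) = sqrt m * sqrt (r_a * (1 - r_a))"
        by (simp add: real_sqrt_mult mult.assoc)
      moreover have "sqrt (r_a * (1 - r_a)) > 0" "sqrt m > 0"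
        using r_a_bounds m by auto
      ultimately show ?thesis
        unfolding c_window_def by (simp add: field_simps)
    qed
    finally show ?thesis .
  qed
  then show ?thesis
    using le_1 by (simp add: window_bound_def m_def)
qed

lemma sum_list_is_ab: "sum_list (map is_ab x) = n_ab x"
  by (induction x) (auto simp: is_ab_def n_ab_Cons n_ab_def)

lemma mean_is_ab: "mean is_ab = q_ab"
proof -
  have "mean is_ab = (\<Sum>z\<in>{1..L}. if z \<in> {a, b} then Q z else 0)"
    unfolding mean_def is_ab_def by (intro sum.cong) auto
  also have "\<dots> = (\<Sum>z\<in>{1..L} \<inter> {a, b}. Q z)"
    by (rule sum.inter_restrict[symmetric]) simp
  also have "{1..L} \<inter> {a, b} = {a, b}"
    using a b by auto
  finally show ?thesis
    using a_ne_b by (simp add: q_ab_def)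
qed

lemma window_bound_le: "0 < R \<Longrightarrow> R < real m \<Longrightarrow> window_bound m \<le> c_window / sqrt R"
  using c_window_pos by (auto simp: window_bound_def min_le_iff_disj intro!: divide_left_mono)

lemma expectation_window_bound_le:
  assumes n: "n \<ge> 1"
  shows "(\<Sum>x\<in>words L n. prob x * window_bound (n_ab x)) \<le> c_anticonc / sqrt n"
proof -
  define R where "R = n * q_ab / 2"
  define far where "far = {x\<in>words L n. R \<le> \<bar>sum_list (map is_ab x) - n * mean is_ab\<bar>}"
  define C where "C = c_window / sqrt R"
  have R: "R > 0"
    using n q_ab_pos by (simp add: R_def)
  have C: "C \<ge> 0"
    using c_window_pos R by (simp add: C_def)
  have pointwise: "window_bound (n_ab x) \<le> (if x \<in> far then 1 else 0) + C" if x: "x \<in> words L n" for x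
  proof (cases "x \<in> far")
    case False
    then have "\<bar>real (n_ab x) - n * q_ab\<bar> < R"
      using x by (simp add: far_def sum_list_is_ab mean_is_ab not_le)
    then have "R < n_ab x"
      unfolding R_def by linarith
    then show ?thesis
      using False window_bound_le[OF R] by (simp add: C_def)
  qed (use C in \<open>simp add: window_bound_def min_le_iff_disj\<close>)
  have "(\<Sum>x\<in>words L n. prob x * window_bound (n_ab x))
      \<le> (\<Sum>x\<in>words L n. (if x \<in> far then prob x else 0) + C * prob x)"
  proof (intro sum_mono)
    fix x assume x: "x \<in> words L n"
    have "prob x * window_bound (n_ab x) \<le> prob x * ((if x \<in> far then 1 else 0) + C)"
      using pointwise[OF x] prob_pos[OF x] by (intro mult_left_mono) auto
    then show "prob x * window_bound (n_ab x) \<le> (if x \<in> far then prob x else 0) + C * prob x"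
      by (cases "x \<in> far") (simp_all add: algebra_simps)
  qed
  also have "\<dots> = (\<Sum>x\<in>far. prob x) + C"
    by (simp add: sum.distrib sum_distrib_left[symmetric] sum_prob_words sum.inter_filter
        finite_words far_def)
  also have "\<dots> \<le> n * variance is_ab / R\<^sup>2 + C"
    using chebyshev_sum_list[OF R, where f = is_ab and n = n] by (simp add: far_def)
  also have "\<dots> \<le> c_anticonc / sqrt n"
  proof -
    have "sqrt n \<le> n"
      using n by (intro real_le_lsqrt) (auto simp: power2_eq_square)
    then have "n * variance is_ab / R\<^sup>2 \<le> (4 * variance is_ab / q_ab\<^sup>2) / sqrt n"
      using n q_ab_pos variance_nonneg[of is_ab]
      by (simp add: R_def power2_eq_square field_simps mult_right_mono)
    moreover have "C = c_window * sqrt 2 / sqrt q_ab / sqrt n"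
      using q_ab_pos n by (simp add: C_def R_def real_sqrt_mult real_sqrt_divide field_simps)
    ultimately show ?thesis
      by (simp add: c_anticonc_def add_divide_distrib)
  qed
  finally show ?thesis .
qed

lemma mass_unit_window_le:
  assumes "n \<ge> 1"
  shows "(\<Sum>x\<in>{x\<in>words L n. t \<le> selfinfo x \<and> selfinfo x < t + 1}. prob x) \<le> c_anticonc / sqrt n"
proof -
  have "(\<Sum>x\<in>{x\<in>words L n. t \<le> selfinfo x \<and> selfinfo x < t + 1}. prob x)
      = (\<Sum>x\<in>words L n. prob x * binom_mix (in_window t) x)"
    by (simp add: window_mass_eq expectation_binom_mix)
  also have "\<dots> \<le> (\<Sum>x\<in>words L n. prob x * window_bound (n_ab x))"
    by (intro sum_mono mult_left_mono binom_mix_in_window_le) (auto intro: less_imp_le prob_pos)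
  also have "\<dots> \<le> c_anticonc / sqrt n"
    by (rule expectation_window_bound_le[OF assms])
  finally show ?thesis .
qed

section \<open>Lower bound on the optimal divergence\<close>

lemma card_selfinfo_lt_le:
  assumes n: "n \<ge> 1"
  shows "card {x\<in>words L n. selfinfo x < k} \<le> 2 * (c_anticonc / sqrt n) * 2 ^ k"
proof -
  define window where "window j = {x\<in>words L n. j \<le> selfinfo x \<and> selfinfo x < real j + 1}"
    for j :: nat
  have "{x\<in>words L n. selfinfo x < k} \<subseteq> (\<Union>j<k. window j)"
  proof
    fix x assume x: "x \<in> {x\<in>words L n. selfinfo x < k}"
    define j where "j = nat \<lfloor>selfinfo x\<rfloor>"
    have "0 \<le> selfinfo x"
      using x selfinfo_nonneg by blast
    then have "real j = of_int \<lfloor>selfinfo x\<rfloor>"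
      by (simp add: j_def)
    then have "real j \<le> selfinfo x" "selfinfo x < real j + 1"
      using floor_correct[of "selfinfo x"] by linarith+
    then have "real j < real k" "x \<in> window j"
      using x by (auto simp: window_def)
    then show "x \<in> (\<Union>j<k. window j)"
      by auto
  qed
  then have "card {x\<in>words L n. selfinfo x < k} \<le> card (\<Union>j<k. window j)"
    by (intro card_mono) (simp_all add: window_def finite_words)
  also have "\<dots> \<le> (\<Sum>j<k. card (window j))"
    by (rule card_UN_le) simp
  finally have "real (card {x\<in>words L n. selfinfo x < k}) \<le> (\<Sum>j<k. real (card (window j)))"
    by (metis of_nat_le_iff of_nat_sum)
  also have "\<dots> \<le> (\<Sum>j<k. 2 ^ Suc j * (c_anticonc / sqrt n))"
  proof (intro sum_mono)
    fix j
    have "card (window j) \<le> 2 powr (real j + 1) * (\<Sum>x\<in>window j. prob x)"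
      by (rule card_le_powr_mass) (auto simp: window_def)
    also have "\<dots> \<le> 2 powr (real j + 1) * (c_anticonc / sqrt n)"
      unfolding window_def by (intro mult_left_mono mass_unit_window_le[OF n]) auto
    also have "2 powr (real j + 1) = 2 ^ Suc j"
      by (metis of_nat_Suc powr_realpow add.commute zero_less_numeral)
    finally show "card (window j) \<le> 2 ^ Suc j * (c_anticonc / sqrt n)" .
  qed
  also have "\<dots> \<le> 2 * 2 ^ k * (c_anticonc / sqrt n)"
    using c_anticonc_pos
    by (simp only: sum_distrib_right[symmetric]) (intro mult_right_mono sum_power2_Suc_le, auto)
  finally show ?thesis
    by (simp add: mult_ac)
qed

lemma Dcode_ge_half_log:
  assumes n: "n \<ge> 1" and S: "S \<subseteq> words L n" "S \<noteq> {}"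
  shows "log 2 n / 2 - log 2 (2 * c_anticonc) - 3 \<le> Dcode L Q n S"
proof -
  define \<eta> where "\<eta> = 2 * (c_anticonc / sqrt n)"
  have \<eta>: "\<eta> > 0"
    using c_anticonc_pos n by (simp add: \<eta>_def)
  have "- log 2 \<eta> - 3 - max 0 (log 2 (card S / \<eta>)) * 0 / card S \<le> Dcode L Q n S"
  proof (rule Dcode_ge_of_card_bound[OF S \<eta>])
    fix k :: nat
    have "card {x\<in>S. selfinfo x < k} \<le> card {x\<in>words L n. selfinfo x < k}"
      using S by (intro card_mono) (auto simp: finite_words)
    then have "real (card {x\<in>S. selfinfo x < k}) \<le> card {x\<in>words L n. selfinfo x < k}"
      by simp
    also have "\<dots> \<le> \<eta> * 2 ^ k"
      using card_selfinfo_lt_le[OF n, of k] by (simp add: \<eta>_def)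
    finally show "card {x\<in>S. selfinfo x < k} \<le> 0 + \<eta> * 2 ^ k"
      by simp
  qed simp
  moreover have "log 2 \<eta> = log 2 (2 * c_anticonc) - log 2 n / 2"
    using c_anticonc_pos n by (simp add: \<eta>_def log_divide log2_sqrt)
  ultimately show ?thesis
    by simp
qed

lemma Dstar_ge_half_log:
  assumes "n \<ge> 1"
  shows "log 2 n / 2 - log 2 (2 * c_anticonc) - 3 \<le> Dstar L Q n"
proof -
  obtain S where "S \<subseteq> words L n" "S \<noteq> {}" "Dstar L Q n = Dcode L Q n S"
    using Dstar_attained a by auto
  then show ?thesis
    using Dcode_ge_half_log[OF assms] by simp
qed

end

theorem theorem3:
  fixes L :: nat and Q :: "nat \<Rightarrow> real"
  assumes pos: "\<forall>a\<in>{1..L}. Q a > 0"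
    and pmf: "(\<Sum>a\<in>{1..L}. Q a) = 1"
    and nonunif: "\<exists>a\<in>{1..L}. Q a \<noteq> unif_L L a"
  shows "((\<lambda>n. Dstar L Q n / ((1/2) * log 2 (real n))) \<longlonglongrightarrow> 1) \<and>
         (\<forall>S :: nat \<Rightarrow> nat list set.
           (\<forall>n\<ge>1. S n \<noteq> {} \<and> S n \<subseteq> words L n \<and> Dcode L Q n (S n) = Dstar L Q n) \<longrightarrow>
           (\<lambda>n. log 2 (real (card (S n))) / real n) \<longlonglongrightarrow> entropy_L L Q)"
proof -
  interpret iid_source L Q
    using pos pmf by unfold_locales
  obtain a b where "a \<in> {1..L}" "b \<in> {1..L}" "Q a \<noteq> Q b"
    using obtain_letters_with_different_prob[OF nonunif] .
  then interpret letter_pair L Q a b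
    by unfold_locales
  define C where "C = 1 + log 2 (4 * sqrt (2 * variance letter_info) + 6)"
  have upper: "Dstar L Q n \<le> log 2 n / 2 + C" if "n \<ge> 1" for n
    using Dstar_le_half_log[OF that] by (simp add: C_def)
  have "(\<lambda>n. Dstar L Q n / ((1/2) * log 2 (real n))) \<longlonglongrightarrow> 1"
  proof (rule tendsto_ratio_half_log)
    show "log 2 n / 2 - (log 2 (2 * c_anticonc) + 3) \<le> Dstar L Q n" if "n \<ge> 1" for n
      using Dstar_ge_half_log[OF that] by simp
  qed (rule upper)
  moreover have "(\<lambda>n. log 2 (real (card (S n))) / real n) \<longlonglongrightarrow> entropy_L L Q"
    if "\<forall>n\<ge>1. S n \<noteq> {} \<and> S n \<subseteq> words L n \<and> Dcode L Q n (S n) = Dstar L Q n" for S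
    using that upper by (intro rate_tendsto_entropy[where C = C]) auto
  ultimately show ?thesis
    by blast
qed

end
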